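(* Let $\mathbb{A}=S^1\times\mathbb{R}$ and let $T:\mathbb{A}\to\mathbb{A}$ be an exact symplectic map which is a twist map with respect to two sets of symplectic coordinates $(q,p)$ and $(x,y)$ on $\mathbb{A}$, with $C^2$ generating functions $H(q,q')$ and $G(x,x')$ respectively, satisfying $H_{12}>0$ and $G_{12}>0$. Assume the geometric assumption: for every $z\in\mathcal{M}_H$ the vector $\frac{\partial}{\partial y}(z)$ lies in the cone $N_H(z)$, and for every $z\in\mathcal{M}_G$ the vector $\frac{\partial}{\partial p}(z)$ lies in the cone $N_G(z)$. Then $\mathcal{M}_H=\mathcal{M}_G$.
   Context: Subscripts $1,2$ denote partial derivatives in the first/second variable. "Symplectic coordinates" means both coordinate systems induce the same symplectic form ($dq\wedge dp=dx\wedge dy$). Generating function convention (on lifts): $T(q,p)=(q',p')$ iff $p=-H_1(q,q')$, $p'=H_2(q,q')$; similarly $T(x,y)=(x',y')$ iff $y=-G_1(x,x')$, $y'=G_2(x,x')$. For $H$: a configuration is a sequence $\{q_n\}_{n\in\mathbb Z}$ with $H_2(q_{n-1},q_n)+H_1(q_n,q_{n+1})=0$ for all $n$ (equivalently, the $q$-coordinates of an orbit $\{(q_n,p_n)\}$ of $T$). It is an m-configuration if for any integers $M<N$ the segment $(q_{M+1},\dots,q_{N-1})$ is a local maximum of $\sum_{n=M}^{N-1}H(x_n,x_{n+1})$ with fixed end points $x_M=q_M$, $x_N=q_N$; the corresponding orbit is an m-orbit, and $\mathcal{M}_H\subseteq\mathbb{A}$ denotes the set swept by all m-orbits for $H$.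 Analogously $\mathcal{M}_G$ is defined using $G$ and the coordinates $(x,y)$. Cones: for a point $z=(q_0,p_0)$ with orbit $\{(q_n,p_n)\}$ satisfying $H_{22}(q_{-1},q_0)<-H_{11}(q_0,q_1)$ (this holds at every point of $\mathcal{M}_H$), write tangent vectors in $T_z\mathbb{A}$ as $(\delta q,\delta p)$; the two lines through the origin with slopes $-H_{11}(q_0,q_1)$ and $H_{22}(q_{-1},q_0)$ divide $T_z\mathbb{A}$ into four cones, denoted $N_H,W_H,S_H,E_H$ in clockwise order, where $N_H$ is the one containing the vertical vector $\frac{\partial}{\partial p}$; explicitly $N_H=\{(\delta q,\delta p):\delta p>\max(-H_{11}(q_0,q_1)\delta q,\ H_{22}(q_{-1},q_0)\delta q)\}$. The cone $N_G$ is defined analogously using $G$, the coordinates $(x,y)$ and the vertical vector $\frac{\partial}{\partial y}$. *)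

theory Defs
  imports "HOL-Analysis.Analysis"
begin

text \<open>Points of the universal cover of the annulus are pairs of reals; the first
  coordinate is the (lifted) angle. Generating functions are functions of two reals.\<close>

definition pd1 :: "(real \<Rightarrow> real \<Rightarrow> real) \<Rightarrow> real \<Rightarrow> real \<Rightarrow> real" where
  "pd1 f a b = deriv (\<lambda>s. f s b) a"

definition pd2 :: "(real \<Rightarrow> real \<Rightarrow> real) \<Rightarrow> real \<Rightarrow> real \<Rightarrow> real" where
  "pd2 f a b = deriv (\<lambda>t. f a t) b"

definition C1_fun2 :: "(real \<Rightarrow> real \<Rightarrow> real) \<Rightarrow> bool" where
  "C1_fun2 f \<longleftrightarrow>
     (\<forall>a b. ((\<lambda>z. f (fst z) (snd z)) has_derivative
               (\<lambda>h. pd1 f a b * fst h + pd2 f a b * snd h)) (at (a, b))) \<and>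
     continuous_on UNIV (\<lambda>z. pd1 f (fst z) (snd z)) \<and>
     continuous_on UNIV (\<lambda>z. pd2 f (fst z) (snd z))"

definition C2_fun2 :: "(real \<Rightarrow> real \<Rightarrow> real) \<Rightarrow> bool" where
  "C2_fun2 f \<longleftrightarrow> C1_fun2 f \<and> C1_fun2 (pd1 f) \<and> C1_fun2 (pd2 f)"

definition orbit :: "('a \<Rightarrow> 'a) \<Rightarrow> (int \<Rightarrow> 'a) \<Rightarrow> bool" where
  "orbit T z \<longleftrightarrow> (\<forall>n. z (n + 1) = T (z n))"

definition config :: "(real \<Rightarrow> real \<Rightarrow> real) \<Rightarrow> (int \<Rightarrow> real) \<Rightarrow> bool" where
  "config H q \<longleftrightarrow> (\<forall>n. pd2 H (q (n - 1)) (q n) + pd1 H (q n) (q (n + 1)) = 0)"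

definition m_config :: "(real \<Rightarrow> real \<Rightarrow> real) \<Rightarrow> (int \<Rightarrow> real) \<Rightarrow> bool" where
  "m_config H q \<longleftrightarrow> config H q \<and>
     (\<forall>M N. M < N \<longrightarrow>
        (\<exists>\<epsilon>>0. \<forall>x :: int \<Rightarrow> real.
            (\<forall>n. n \<notin> {M<..<N} \<longrightarrow> x n = q n) \<and>
            (\<forall>n\<in>{M<..<N}. \<bar>x n - q n\<bar> < \<epsilon>) \<longrightarrow>
            (\<Sum>n\<in>{M..<N}. H (x n) (x (n + 1))) \<le> (\<Sum>n\<in>{M..<N}. H (q n) (q (n + 1)))))"

text \<open>The set swept by all m-orbits: points of orbits of T (on the common point space)
  whose angle coordinate, read through the coordinate function c, is an m-configuration
  of the generating function H.\<close>
definition msweep :: "('p \<Rightarrow> 'p) \<Rightarrow> ('p \<Rightarrow> real) \<Rightarrow> (real \<Rightarrow> real \<Rightarrow> real) \<Rightarrow> 'p set" where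
  "msweep T c H = {z n | z n. orbit T z \<and> m_config H (\<lambda>k. c (z k))}"

definition N_cone :: "(real \<Rightarrow> real \<Rightarrow> real) \<Rightarrow> real \<Rightarrow> real \<Rightarrow> real \<Rightarrow> (real \<times> real) set" where
  "N_cone H qm q0 q1 =
     {(dq, dp). dp > max (- pd1 (pd1 H) q0 q1 * dq) (pd2 (pd2 H) qm q0 * dq)}"

end

(* Linearizing the orbit equation of a generating function K along a configuration s gives the
   discrete Jacobi equation with coefficients the second partials of K on consecutive pairs
   (s k, s (k + 1)). A configuration is an m-configuration iff it has no conjugate points, i.e.
   every Jacobi field with u j = 0 < u (j + 1) stays positive. If a field turns non-positive,
   cutting it off there gives a variation with positive second variation. Conversely a positive
   Jacobi field g, Picone's identity and a discrete Poincare inequality make the second variation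
   non-positive along all segments close to s, so s is a local maximum of the action.

   The derivative of the coordinate change maps H-Jacobi fields, together with their momenta, to
   G-Jacobi fields and preserves the symplectic form. With the cone hypothesis, Sturm separation
   shows that the absence of conjugate points passes from H to G and back. *)

theory Submission
  imports Defs
begin

section \<open>Functions of two variables\<close>

lemma C1_fun2_chain:
  assumes K: "C1_fun2 K"
    and X: "(X has_real_derivative X') (at t within S)"
    and Y: "(Y has_real_derivative Y') (at t within S)"
  shows "((\<lambda>t. K (X t) (Y t)) has_real_derivative
           pd1 K (X t) (Y t) * X' + pd2 K (X t) (Y t) * Y') (at t within S)"
proof -
  have DK: "((\<lambda>z. K (fst z) (snd z)) has_derivative
        (\<lambda>h. pd1 K (X t) (Y t) * fst h + pd2 K (X t) (Y t) * snd h)) (at (X t, Y t))"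
    using K unfolding C1_fun2_def by blast
  have DXY: "((\<lambda>t. (X t, Y t)) has_derivative (\<lambda>h. (X' * h, Y' * h))) (at t within S)"
    using X Y by (auto intro!: has_derivative_Pair simp: has_field_derivative_def)
  have "((\<lambda>t. K (X t) (Y t)) has_derivative
      (\<lambda>h. pd1 K (X t) (Y t) * (X' * h) + pd2 K (X t) (Y t) * (Y' * h))) (at t within S)"
    using has_derivative_compose[OF DXY DK] by simp
  then show ?thesis
    unfolding has_field_derivative_def by (rule has_derivative_eq_rhs) (auto simp: algebra_simps)
qed

lemma has_real_derivative_pd1:
  "C1_fun2 K \<Longrightarrow> ((\<lambda>x. K x y) has_real_derivative pd1 K x y) (at x within S)"
  using C1_fun2_chain[of K "\<lambda>x. x" 1 x S "\<lambda>_. y" 0] by simp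

lemma has_real_derivative_pd2:
  "C1_fun2 K \<Longrightarrow> ((\<lambda>y. K x y) has_real_derivative pd2 K x y) (at y within S)"
  using C1_fun2_chain[of K "\<lambda>_. x" 0 y S "\<lambda>y. y" 1] by simp

lemma has_real_derivative_along_line:
  assumes "C1_fun2 K"
  shows "((\<lambda>t. K (a + t * c) (b + t * d)) has_real_derivative
     pd1 K (a + t * c) (b + t * d) * c + pd2 K (a + t * c) (b + t * d) * d) (at t within S)"
  by (rule C1_fun2_chain[OF assms]) (auto intro!: derivative_eq_intros)

lemma continuous_on_fun2_box:
  fixes F :: "real \<Rightarrow> real \<Rightarrow> real"
  assumes "continuous_on UNIV (\<lambda>z. F (fst z) (snd z))" "e > 0"
  obtains d where "d > 0" "\<And>x y. \<bar>x - a\<bar> < d \<Longrightarrow> \<bar>y - b\<bar> < d \<Longrightarrow> \<bar>F x y - F a b\<bar> < e"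
proof -
  from assms obtain d where d: "d > 0"
    "\<And>z. dist z (a, b) < d \<Longrightarrow> dist (F (fst z) (snd z)) (F a b) < e"
    unfolding continuous_on_iff by (metis UNIV_I fst_conv snd_conv)
  show thesis
  proof (rule that[of "d / 2"])
    fix x y assume xy: "\<bar>x - a\<bar> < d / 2" "\<bar>y - b\<bar> < d / 2"
    have "dist (x, y) (a, b) \<le> dist x a + dist y b"
      unfolding dist_Pair_Pair by (rule sqrt_sum_squares_le_sum_abs[THEN order_trans]) auto
    also have "\<dots> < d" using xy by (simp add: dist_real_def)
    finally show "\<bar>F x y - F a b\<bar> < e" using d(2)[of "(x, y)"] by (simp add: dist_real_def)
  qed (use d in simp)
qed

lemma double_difference_eq_pd2_pd1:
  assumes "C1_fun2 K" "C1_fun2 (pd1 K)" "h > 0"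
  obtains \<xi> \<eta> where "a < \<xi>" "\<xi> < a + h" "b < \<eta>" "\<eta> < b + h"
    "K (a + h) (b + h) - K (a + h) b - K a (b + h) + K a b = h * (h * pd2 (pd1 K) \<xi> \<eta>)"
proof -
  have "\<exists>\<xi>. a < \<xi> \<and> \<xi> < a + h \<and>
    (K (a + h) (b + h) - K (a + h) b) - (K a (b + h) - K a b) = (a + h - a) * (pd1 K \<xi> (b + h) - pd1 K \<xi> b)"
    by (rule MVT2) (use assms in \<open>auto intro!: derivative_eq_intros has_real_derivative_pd1\<close>)
  then obtain \<xi> where \<xi>: "a < \<xi>" "\<xi> < a + h"
    "(K (a + h) (b + h) - K (a + h) b) - (K a (b + h) - K a b) = h * (pd1 K \<xi> (b + h) - pd1 K \<xi> b)"
    by auto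
  have "\<exists>\<eta>. b < \<eta> \<and> \<eta> < b + h \<and> pd1 K \<xi> (b + h) - pd1 K \<xi> b = (b + h - b) * pd2 (pd1 K) \<xi> \<eta>"
    by (rule MVT2) (use assms in \<open>auto intro!: has_real_derivative_pd2\<close>)
  then obtain \<eta> where \<eta>: "b < \<eta>" "\<eta> < b + h"
    "pd1 K \<xi> (b + h) - pd1 K \<xi> b = h * pd2 (pd1 K) \<xi> \<eta>"
    by auto
  show thesis by (rule that[OF \<xi>(1,2) \<eta>(1,2)]) (use \<xi>(3) \<eta>(3) in simp)
qed

lemma double_difference_eq_pd1_pd2:
  assumes "C1_fun2 K" "C1_fun2 (pd2 K)" "h > 0"
  obtains \<xi> \<eta> where "a < \<xi>" "\<xi> < a + h" "b < \<eta>" "\<eta> < b + h"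
    "K (a + h) (b + h) - K (a + h) b - K a (b + h) + K a b = h * (h * pd1 (pd2 K) \<xi> \<eta>)"
proof -
  have "\<exists>\<eta>. b < \<eta> \<and> \<eta> < b + h \<and>
    (K (a + h) (b + h) - K a (b + h)) - (K (a + h) b - K a b) = (b + h - b) * (pd2 K (a + h) \<eta> - pd2 K a \<eta>)"
    by (rule MVT2) (use assms in \<open>auto intro!: derivative_eq_intros has_real_derivative_pd2\<close>)
  then obtain \<eta> where \<eta>: "b < \<eta>" "\<eta> < b + h"
    "(K (a + h) (b + h) - K a (b + h)) - (K (a + h) b - K a b) = h * (pd2 K (a + h) \<eta> - pd2 K a \<eta>)"
    by auto
  have "\<exists>\<xi>. a < \<xi> \<and> \<xi> < a + h \<and> pd2 K (a + h) \<eta> - pd2 K a \<eta> = (a + h - a) * pd1 (pd2 K) \<xi> \<eta>"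
    by (rule MVT2) (use assms in \<open>auto intro!: has_real_derivative_pd1\<close>)
  then obtain \<xi> where \<xi>: "a < \<xi>" "\<xi> < a + h"
    "pd2 K (a + h) \<eta> - pd2 K a \<eta> = h * pd1 (pd2 K) \<xi> \<eta>"
    by auto
  show thesis by (rule that[OF \<xi>(1,2) \<eta>(1,2)]) (use \<xi>(3) \<eta>(3) in \<open>simp add: algebra_simps\<close>)
qed

text \<open>Schwarz's theorem: both mixed partials are limits of the same double difference quotient.\<close>
lemma C2_fun2_pd_commute:
  assumes K: "C2_fun2 K"
  shows "pd1 (pd2 K) a b = pd2 (pd1 K) a b"
proof (rule ccontr)
  assume ne: "pd1 (pd2 K) a b \<noteq> pd2 (pd1 K) a b"
  define e where "e = \<bar>pd1 (pd2 K) a b - pd2 (pd1 K) a b\<bar> / 2"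
  have e: "e > 0" using ne by (simp add: e_def)
  have K1: "C1_fun2 K" "C1_fun2 (pd1 K)" "C1_fun2 (pd2 K)"
    using K by (auto simp: C2_fun2_def)
  obtain d1 where d1: "d1 > 0" "\<And>x y. \<bar>x - a\<bar> < d1 \<Longrightarrow> \<bar>y - b\<bar> < d1 \<Longrightarrow>
      \<bar>pd2 (pd1 K) x y - pd2 (pd1 K) a b\<bar> < e"
    using continuous_on_fun2_box[OF _ e] K1(2) unfolding C1_fun2_def by blast
  obtain d2 where d2: "d2 > 0" "\<And>x y. \<bar>x - a\<bar> < d2 \<Longrightarrow> \<bar>y - b\<bar> < d2 \<Longrightarrow>
      \<bar>pd1 (pd2 K) x y - pd1 (pd2 K) a b\<bar> < e"
    using continuous_on_fun2_box[OF _ e] K1(3) unfolding C1_fun2_def by blast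
  define h where "h = min d1 d2 / 2"
  have h: "h > 0" "h < d1" "h < d2" using d1 d2 by (auto simp: h_def)
  obtain \<xi> \<eta> where \<xi>\<eta>: "a < \<xi>" "\<xi> < a + h" "b < \<eta>" "\<eta> < b + h"
    "K (a + h) (b + h) - K (a + h) b - K a (b + h) + K a b = h * (h * pd2 (pd1 K) \<xi> \<eta>)"
    using double_difference_eq_pd2_pd1[OF K1(1,2) h(1)] .
  obtain \<xi>' \<eta>' where \<xi>\<eta>': "a < \<xi>'" "\<xi>' < a + h" "b < \<eta>'" "\<eta>' < b + h"
    "K (a + h) (b + h) - K (a + h) b - K a (b + h) + K a b = h * (h * pd1 (pd2 K) \<xi>' \<eta>')"
    using double_difference_eq_pd1_pd2[OF K1(1,3) h(1)] .
  have "pd2 (pd1 K) \<xi> \<eta> = pd1 (pd2 K) \<xi>' \<eta>'"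
    using \<xi>\<eta>(5) \<xi>\<eta>'(5) h(1) by simp
  moreover have "\<bar>pd2 (pd1 K) \<xi> \<eta> - pd2 (pd1 K) a b\<bar> < e" using d1(2) \<xi>\<eta> h by auto
  moreover have "\<bar>pd1 (pd2 K) \<xi>' \<eta>' - pd1 (pd2 K) a b\<bar> < e" using d2(2) \<xi>\<eta>' h by auto
  ultimately have "\<bar>pd1 (pd2 K) a b - pd2 (pd1 K) a b\<bar> < 2 * e" by linarith
  then show False by (simp add: e_def)
qed

section \<open>Discrete Jacobi fields\<close>

definition d11 :: "(real \<Rightarrow> real \<Rightarrow> real) \<Rightarrow> (int \<Rightarrow> real) \<Rightarrow> int \<Rightarrow> real" where
  "d11 K s n = pd1 (pd1 K) (s n) (s (n + 1))"

definition d12 :: "(real \<Rightarrow> real \<Rightarrow> real) \<Rightarrow> (int \<Rightarrow> real) \<Rightarrow> int \<Rightarrow> real" where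
  "d12 K s n = pd2 (pd1 K) (s n) (s (n + 1))"

definition d22 :: "(real \<Rightarrow> real \<Rightarrow> real) \<Rightarrow> (int \<Rightarrow> real) \<Rightarrow> int \<Rightarrow> real" where
  "d22 K s n = pd2 (pd2 K) (s n) (s (n + 1))"

definition jacobi_op :: "(real \<Rightarrow> real \<Rightarrow> real) \<Rightarrow> (int \<Rightarrow> real) \<Rightarrow> (int \<Rightarrow> real) \<Rightarrow> int \<Rightarrow> real" where
  "jacobi_op K s u k =
     d12 K s (k - 1) * u (k - 1) + (d22 K s (k - 1) + d11 K s k) * u k + d12 K s k * u (k + 1)"

definition jacobi_field :: "(real \<Rightarrow> real \<Rightarrow> real) \<Rightarrow> (int \<Rightarrow> real) \<Rightarrow> int \<Rightarrow> (int \<Rightarrow> real) \<Rightarrow> bool" where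
  "jacobi_field K s j u \<longleftrightarrow> (\<forall>k>j. jacobi_op K s u k = 0)"

text \<open>The p-component of the tangent vector \<open>(u k, jacobi_momentum K s u k)\<close> of a variation of
  the orbit: the linearization of \<open>p = - K\<^sub>1(q, q')\<close>.\<close>
definition jacobi_momentum :: "(real \<Rightarrow> real \<Rightarrow> real) \<Rightarrow> (int \<Rightarrow> real) \<Rightarrow> (int \<Rightarrow> real) \<Rightarrow> int \<Rightarrow> real" where
  "jacobi_momentum K s u k = - d11 K s k * u k - d12 K s k * u (k + 1)"

definition no_conjugate_points :: "(real \<Rightarrow> real \<Rightarrow> real) \<Rightarrow> (int \<Rightarrow> real) \<Rightarrow> bool" where
  "no_conjugate_points K s \<longleftrightarrow>
     (\<forall>j u. jacobi_field K s j u \<longrightarrow> u j = 0 \<longrightarrow> u (j + 1) > 0 \<longrightarrow> (\<forall>n>j. u n > 0))"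

definition symplectic_form :: "real \<times> real \<Rightarrow> real \<times> real \<Rightarrow> real" where
  "symplectic_form v w = fst v * snd w - snd v * fst w"

lemma jacobi_field_mono: "jacobi_field K s j u \<Longrightarrow> j \<le> j' \<Longrightarrow> jacobi_field K s j' u"
  unfolding jacobi_field_def by auto

lemma jacobi_field_scale:
  assumes "jacobi_field K s j u"
  shows "jacobi_field K s j (\<lambda>n. c * u n)"
proof -
  have "jacobi_op K s (\<lambda>n. c * u n) k = c * jacobi_op K s u k" for k
    unfolding jacobi_op_def by (simp add: algebra_simps)
  with assms show ?thesis unfolding jacobi_field_def by simp
qed

lemma jacobi_field_next:
  assumes "jacobi_field K s j u" "j < k"
  shows "d12 K s k * u (k + 1) = - d12 K s (k - 1) * u (k - 1) - (d22 K s (k - 1) + d11 K s k) * u k"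
proof -
  have "jacobi_op K s u k = 0" using assms unfolding jacobi_field_def by blast
  then show ?thesis unfolding jacobi_op_def by (simp add: algebra_simps)
qed

lemma jacobi_momentum_backward:
  assumes "jacobi_field K s j u" "j < k"
  shows "jacobi_momentum K s u k = d12 K s (k - 1) * u (k - 1) + d22 K s (k - 1) * u k"
  using jacobi_field_next[OF assms] unfolding jacobi_momentum_def by (simp add: algebra_simps)

lemma jacobi_field_exists:
  assumes nz: "\<And>n. d12 K s n \<noteq> 0"
  shows "\<exists>u. jacobi_field K s j u \<and> u j = \<alpha> \<and> u (j + 1) = \<beta>"
proof -
  define step where "step m p = (snd p,
      - (d12 K s (j + int m) * fst p + (d22 K s (j + int m) + d11 K s (j + int m + 1)) * snd p)
        / d12 K s (j + int m + 1))" for m p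
  define r where "r = rec_nat (\<alpha>, \<beta>) step"
  have r0: "r 0 = (\<alpha>, \<beta>)" and rS: "r (Suc m) = step m (r m)" for m
    by (simp_all add: r_def)
  define u where "u k = fst (r (nat (k - j)))" for k
  have "jacobi_op K s u k = 0" if "k > j" for k
  proof -
    obtain m where m: "k = j + int m + 1"
      using \<open>k > j\<close> by (metis add.commute add.assoc of_nat_Suc zless_iff_Suc_zadd)
    have "u (k - 1) = fst (r m)" "u k = snd (r m)" "u (k + 1) = snd (step m (r m))"
      by (simp_all add: u_def m nat_add_distrib rS Suc_eq_plus1[symmetric] step_def)
    then show ?thesis
      using nz[of k] unfolding jacobi_op_def by (simp add: m step_def field_simps)
  qed
  moreover have "u j = \<alpha>" "u (j + 1) = \<beta>"
    by (simp_all add: u_def r0 rS step_def)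
  ultimately show ?thesis unfolding jacobi_field_def by blast
qed

lemma jacobi_field_unique:
  assumes nz: "\<And>n. d12 K s n \<noteq> 0" and u: "jacobi_field K s j u" and v: "jacobi_field K s j v"
    and "u j = v j" "u (j + 1) = v (j + 1)" and "j \<le> n"
  shows "u n = v n"
proof -
  have "u (j + int m) = v (j + int m) \<and> u (j + int m + 1) = v (j + int m + 1)" for m
  proof (induction m)
    case 0 then show ?case using assms by simp
  next
    case (Suc m)
    define k where "k = j + int m + 1"
    have prev: "u (k - 1) = v (k - 1)" "u k = v k" using Suc.IH by (simp_all add: k_def)
    have "d12 K s k * u (k + 1) = d12 K s k * v (k + 1)"
      using jacobi_field_next[OF u, of k] jacobi_field_next[OF v, of k] prev by (simp add: k_def)
    then have "u (k + 1) = v (k + 1)" using nz[of k] by simp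
    moreover have "j + int (Suc m) = k" by (simp add: k_def)
    ultimately show ?case using prev(2) by simp
  qed
  from this[of "nat (n - j)"] \<open>j \<le> n\<close> show ?thesis by simp
qed

lemma jacobi_field_exists_momentum:
  assumes nz: "\<And>n. d12 K s n \<noteq> 0"
  shows "\<exists>u. jacobi_field K s (j - 1) u \<and> u j = a \<and> jacobi_momentum K s u j = p"
proof -
  obtain u where u: "jacobi_field K s (j - 1) u"
    "u (j - 1) = (p - d22 K s (j - 1) * a) / d12 K s (j - 1)" "u (j - 1 + 1) = a"
    using jacobi_field_exists[OF nz] by blast
  have "jacobi_momentum K s u j = p"
    using jacobi_momentum_backward[OF u(1), of j] u(2,3) nz[of "j - 1"] by simp
  with u show ?thesis by auto
qed

lemma jacobi_wronskian_const:
  assumes u: "jacobi_field K s j u" and v: "jacobi_field K s j v" and "j \<le> n"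
  shows "d12 K s n * (u n * v (n + 1) - u (n + 1) * v n)
       = d12 K s j * (u j * v (j + 1) - u (j + 1) * v j)"
  using \<open>j \<le> n\<close>
proof (induction n rule: int_ge_induct)
  case base then show ?case by simp
next
  case (step i)
  have nu: "d12 K s (i + 1) * u (i + 1 + 1) = - d12 K s i * u i - (d22 K s i + d11 K s (i + 1)) * u (i + 1)"
    using jacobi_field_next[OF u, of "i + 1"] step(1) by simp
  have nv: "d12 K s (i + 1) * v (i + 1 + 1) = - d12 K s i * v i - (d22 K s i + d11 K s (i + 1)) * v (i + 1)"
    using jacobi_field_next[OF v, of "i + 1"] step(1) by simp
  have "d12 K s (i + 1) * (u (i + 1) * v (i + 1 + 1) - u (i + 1 + 1) * v (i + 1))
      = u (i + 1) * (d12 K s (i + 1) * v (i + 1 + 1)) - v (i + 1) * (d12 K s (i + 1) * u (i + 1 + 1))"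
    by (simp add: algebra_simps)
  also have "\<dots> = d12 K s i * (u i * v (i + 1) - u (i + 1) * v i)"
    unfolding nu nv by (simp add: algebra_simps)
  finally show ?case using step by simp
qed

lemma jacobi_field_pos_of_wronskian:
  assumes pos: "\<And>n. d12 K s n > 0" and f: "jacobi_field K s m f" and u: "jacobi_field K s m u"
    and f_pos: "\<And>n. n > m \<Longrightarrow> f n > 0"
    and W: "f m * u (m + 1) - f (m + 1) * u m \<ge> 0" and "u (m + 1) > 0" and "n \<ge> m + 1"
  shows "u n > 0"
  using \<open>n \<ge> m + 1\<close>
proof (induction n rule: int_ge_induct)
  case base then show ?case using \<open>u (m + 1) > 0\<close> .
next
  case (step i)
  have "d12 K s i * (f i * u (i + 1) - f (i + 1) * u i) \<ge> 0"
    using jacobi_wronskian_const[OF f u, of i] step(1) W pos[of m] by simp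
  then have "f i * u (i + 1) \<ge> f (i + 1) * u i" using pos[of i] by (simp add: zero_le_mult_iff)
  moreover have "f (i + 1) * u i > 0" using f_pos[of "i + 1"] step by simp
  ultimately have "f i * u (i + 1) > 0" by linarith
  then show ?case using f_pos[of i] step(1) by (simp add: zero_less_mult_iff)
qed

text \<open>Sturm separation: compare \<open>u\<close> with the field vanishing at \<open>j\<close> or at \<open>j - 1\<close>,
  according to the sign of \<open>u j\<close>.\<close>
lemma jacobi_field_pos_after_sign_change:
  assumes pos: "\<And>n. d12 K s n > 0" and nc: "no_conjugate_points K s"
    and u: "jacobi_field K s (j - 1) u" and "u (j - 1) < 0" "u (j + 1) > 0" and "n \<ge> j + 1"
  shows "u n > 0"
proof -
  have nz: "\<And>n. d12 K s n \<noteq> 0" using pos by (metis less_irrefl)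
  show ?thesis
  proof (cases "u j \<le> 0")
    case True
    obtain f where f: "jacobi_field K s j f" "f j = 0" "f (j + 1) = 1"
      using jacobi_field_exists[OF nz] by blast
    have "\<And>n. n > j \<Longrightarrow> f n > 0" using nc f unfolding no_conjugate_points_def by auto
    from jacobi_field_pos_of_wronskian[OF pos f(1) jacobi_field_mono[OF u] this]
    show ?thesis using True assms by (simp add: f)
  next
    case False
    obtain f where f: "jacobi_field K s (j - 1) f" "f (j - 1) = 0" "f j = 1"
      using jacobi_field_exists[OF nz, of "j - 1"] by auto
    have "\<And>n. n > j - 1 \<Longrightarrow> f n > 0" using nc f unfolding no_conjugate_points_def by auto
    from jacobi_field_pos_of_wronskian[OF pos f(1) u this, of n]
    show ?thesis using False assms by (simp add: f)
  qed
qed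

lemma no_conjugate_pointsI:
  assumes pos: "\<And>n. d12 K s n > 0"
    and ex: "\<And>j. \<exists>u. jacobi_field K s j u \<and> u j = 0 \<and> u (j + 1) > 0 \<and> (\<forall>n>j. u n > 0)"
  shows "no_conjugate_points K s"
  unfolding no_conjugate_points_def
proof (intro allI impI)
  fix j v n assume v: "jacobi_field K s j v" "v j = 0" "v (j + 1) > 0" and "n > j"
  obtain u where u: "jacobi_field K s j u" "u j = 0" "u (j + 1) > 0" "\<forall>n>j. u n > 0"
    using ex by blast
  have nz: "\<And>n. d12 K s n \<noteq> 0" using pos by (metis less_irrefl)
  define c where "c = v (j + 1) / u (j + 1)"
  have "v n = c * u n"
    by (rule jacobi_field_unique[OF nz v(1) jacobi_field_scale[OF u(1)]])
      (use v(2) u(2,3) \<open>n > j\<close> in \<open>simp_all add: c_def\<close>)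
  moreover have "c > 0" using u v by (simp add: c_def)
  ultimately show "v n > 0" using u(4) \<open>n > j\<close> by simp
qed

text \<open>The momentum has a forward and a backward expression; which one to use depends on the
  sign of the q-component of the cone vector.\<close>
lemma symplectic_form_jacobi_N_cone_pos:
  assumes pos: "\<And>n. d12 K s n > 0" and u: "jacobi_field K s j u" and "j < k"
    and "u (k - 1) > 0" "u k > 0" "u (k + 1) > 0"
    and w: "w \<in> N_cone K (s (k - 1)) (s k) (s (k + 1))"
  shows "symplectic_form (u k, jacobi_momentum K s u k) w > 0"
proof -
  obtain J P where w_eq: "w = (J, P)" by (cases w)
  have P: "P > - d11 K s k * J" "P > d22 K s (k - 1) * J"
    using w unfolding w_eq N_cone_def d11_def d22_def by auto
  show ?thesis
  proof (cases "J \<ge> 0")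
    case True
    have "symplectic_form (u k, jacobi_momentum K s u k) w = u k * (P + d11 K s k * J) + d12 K s k * u (k + 1) * J"
      unfolding symplectic_form_def w_eq jacobi_momentum_def by (simp add: algebra_simps)
    moreover have "u k * (P + d11 K s k * J) > 0" using P assms by simp
    moreover have "d12 K s k * u (k + 1) > 0" using pos[of k] assms by simp
    then have "d12 K s k * u (k + 1) * J \<ge> 0" using True by simp
    ultimately show ?thesis by linarith
  next
    case False
    have "symplectic_form (u k, jacobi_momentum K s u k) w
        = u k * (P - d22 K s (k - 1) * J) + d12 K s (k - 1) * u (k - 1) * (- J)"
      unfolding symplectic_form_def w_eq jacobi_momentum_backward[OF u \<open>j < k\<close>] by (simp add: algebra_simps)
    moreover have "u k * (P - d22 K s (k - 1) * J) > 0" using P assms by simp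
    moreover have "d12 K s (k - 1) * u (k - 1) > 0" using pos[of "k - 1"] assms by simp
    then have "d12 K s (k - 1) * u (k - 1) * (- J) > 0" using False by (simp only: mult_pos_pos neg_0_less_iff_less not_le)
    ultimately show ?thesis by linarith
  qed
qed

lemma jacobi_field_sign_change_of_N_cone:
  assumes pos: "\<And>n. d12 K s n > 0" and u: "jacobi_field K s (j - 1) u"
    and cone: "(- u j, - jacobi_momentum K s u j) \<in> N_cone K (s (j - 1)) (s j) (s (j + 1))"
  shows "u (j - 1) < 0" "u (j + 1) > 0"
proof -
  have fwd: "- jacobi_momentum K s u j > - d11 K s j * (- u j)"
    and bwd: "- jacobi_momentum K s u j > d22 K s (j - 1) * (- u j)"
    using cone unfolding N_cone_def d11_def d22_def by auto
  have "d12 K s j * u (j + 1) > 0"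
    using fwd unfolding jacobi_momentum_def by (simp add: algebra_simps)
  moreover have "d12 K s (j - 1) * u (j - 1) < 0"
    using bwd unfolding jacobi_momentum_backward[OF u, of j, simplified] by (simp add: algebra_simps)
  ultimately show "u (j - 1) < 0" "u (j + 1) > 0"
    using pos[of j] pos[of "j - 1"] by (simp_all add: zero_less_mult_iff mult_less_0_iff)
qed

lemma jacobi_field_N_cone_pos:
  assumes pos: "\<And>n. d12 K s n > 0" and nc: "no_conjugate_points K s"
    and u: "jacobi_field K s (j - 1) u"
    and cone: "(- u j, - jacobi_momentum K s u j) \<in> N_cone K (s (j - 1)) (s j) (s (j + 1))"
  shows "u (j + 1) > 0"
    and "\<And>k w. j + 2 \<le> k \<Longrightarrow> w \<in> N_cone K (s (k - 1)) (s k) (s (k + 1)) \<Longrightarrow>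
           symplectic_form (u k, jacobi_momentum K s u k) w > 0"
proof -
  note sign = jacobi_field_sign_change_of_N_cone[OF pos u cone]
  show "u (j + 1) > 0" by (rule sign(2))
  fix k w assume "j + 2 \<le> k" and w: "w \<in> N_cone K (s (k - 1)) (s k) (s (k + 1))"
  have "u n > 0" if "n \<ge> j + 1" for n
    by (rule jacobi_field_pos_after_sign_change[OF pos nc u sign that])
  then show "symplectic_form (u k, jacobi_momentum K s u k) w > 0"
    using symplectic_form_jacobi_N_cone_pos[OF pos u _ _ _ _ w] \<open>j + 2 \<le> k\<close> by simp
qed

section \<open>Variations of the action\<close>

definition action :: "(real \<Rightarrow> real \<Rightarrow> real) \<Rightarrow> (int \<Rightarrow> real) \<Rightarrow> int \<Rightarrow> int \<Rightarrow> real" where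
  "action K s M N = (\<Sum>n\<in>{M..<N}. K (s n) (s (n + 1)))"

definition first_variation ::
    "(real \<Rightarrow> real \<Rightarrow> real) \<Rightarrow> (int \<Rightarrow> real) \<Rightarrow> (int \<Rightarrow> real) \<Rightarrow> int \<Rightarrow> int \<Rightarrow> real" where
  "first_variation K s w M N =
     (\<Sum>n\<in>{M..<N}. pd1 K (s n) (s (n + 1)) * w n + pd2 K (s n) (s (n + 1)) * w (n + 1))"

definition second_variation ::
    "(real \<Rightarrow> real \<Rightarrow> real) \<Rightarrow> (int \<Rightarrow> real) \<Rightarrow> (int \<Rightarrow> real) \<Rightarrow> int \<Rightarrow> int \<Rightarrow> real" where
  "second_variation K s w M N =
     (\<Sum>n\<in>{M..<N}. d11 K s n * (w n)\<^sup>2 + 2 * d12 K s n * w n * w (n + 1) + d22 K s n * (w (n + 1))\<^sup>2)"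

lemma sum_int_insert_top: "M \<le> N \<Longrightarrow> (\<Sum>n\<in>{M..<N + 1::int}. g n) = g N + (\<Sum>n\<in>{M..<N}. g n)"
proof -
  assume "M \<le> N"
  then have "{M..<N + 1} = insert N {M..<N}" by auto
  then show ?thesis by simp
qed

lemma sum_regroup_shift:
  assumes "M < N"
  shows "(\<Sum>n\<in>{M..<N::int}. F n + G (n + 1)) = F M + G N + (\<Sum>k\<in>{M + 1..<N}. F k + G k)"
proof -
  have low: "{M..<N} = insert M {M + 1..<N}" using assms by auto
  have "(\<Sum>n\<in>{M..<N}. G (n + 1)) = (\<Sum>k\<in>{M + 1..<N + 1}. G k)"
    by (rule sum.reindex_bij_witness[of _ "\<lambda>k. k - 1" "\<lambda>n. n + 1"]) auto
  also have "\<dots> = G N + (\<Sum>k\<in>{M + 1..<N}. G k)"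
    using sum_int_insert_top[of "M + 1" N G] assms by simp
  finally have shift: "(\<Sum>n\<in>{M..<N}. G (n + 1)) = G N + (\<Sum>k\<in>{M + 1..<N}. G k)" .
  show ?thesis unfolding sum.distrib shift by (simp add: low algebra_simps)
qed

lemma second_variation_eq_sum_jacobi_op:
  assumes "M < N" "w M = 0" "w N = 0"
  shows "second_variation K s w M N = (\<Sum>k\<in>{M + 1..<N}. w k * jacobi_op K s w k)"
proof -
  have "second_variation K s w M N = (\<Sum>n\<in>{M..<N}. (d11 K s n * (w n)\<^sup>2 + d12 K s n * w n * w (n + 1))
      + (d12 K s (n + 1 - 1) * w (n + 1 - 1) * w (n + 1) + d22 K s (n + 1 - 1) * (w (n + 1))\<^sup>2))"
    unfolding second_variation_def by (rule sum.cong) (simp_all add: algebra_simps)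
  also have "\<dots> = (\<Sum>k\<in>{M + 1..<N}. (d11 K s k * (w k)\<^sup>2 + d12 K s k * w k * w (k + 1))
      + (d12 K s (k - 1) * w (k - 1) * w k + d22 K s (k - 1) * (w k)\<^sup>2))"
    using sum_regroup_shift[OF assms(1), of "\<lambda>n. d11 K s n * (w n)\<^sup>2 + d12 K s n * w n * w (n + 1)"
        "\<lambda>k. d12 K s (k - 1) * w (k - 1) * w k + d22 K s (k - 1) * (w k)\<^sup>2"] assms(2,3)
    by (simp add: power2_eq_square)
  also have "\<dots> = (\<Sum>k\<in>{M + 1..<N}. w k * jacobi_op K s w k)"
    unfolding jacobi_op_def by (rule sum.cong) (simp_all add: algebra_simps power2_eq_square)
  finally show ?thesis .
qed

lemma has_real_derivative_action:
  assumes "C1_fun2 K"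
  shows "((\<lambda>t. action K (\<lambda>n. s n + t * w n) M N) has_real_derivative
           first_variation K (\<lambda>n. s n + t * w n) w M N) (at t within X)"
  unfolding action_def first_variation_def
  by (intro DERIV_sum C1_fun2_chain[OF assms]) (auto intro!: derivative_eq_intros)

lemma has_real_derivative_first_variation:
  assumes K: "C2_fun2 K"
  shows "((\<lambda>t. first_variation K (\<lambda>n. s n + t * w n) w M N) has_real_derivative
           second_variation K (\<lambda>n. s n + t * w n) w M N) (at t within X)"
proof -
  let ?y = "\<lambda>n. s n + t * w n"
  have K1: "C1_fun2 (pd1 K)" "C1_fun2 (pd2 K)" using K by (auto simp: C2_fun2_def)
  have "((\<lambda>t. first_variation K (\<lambda>n. s n + t * w n) w M N) has_real_derivative
     (\<Sum>n\<in>{M..<N}. (pd1 (pd1 K) (?y n) (?y (n + 1)) * w n + pd2 (pd1 K) (?y n) (?y (n + 1)) * w (n + 1)) * w n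
       + (pd1 (pd2 K) (?y n) (?y (n + 1)) * w n + pd2 (pd2 K) (?y n) (?y (n + 1)) * w (n + 1)) * w (n + 1)))
     (at t within X)"
    unfolding first_variation_def
    by (intro DERIV_sum DERIV_add DERIV_cmult_right has_real_derivative_along_line K1)
  moreover have "(\<Sum>n\<in>{M..<N}. (pd1 (pd1 K) (?y n) (?y (n + 1)) * w n + pd2 (pd1 K) (?y n) (?y (n + 1)) * w (n + 1)) * w n
       + (pd1 (pd2 K) (?y n) (?y (n + 1)) * w n + pd2 (pd2 K) (?y n) (?y (n + 1)) * w (n + 1)) * w (n + 1))
      = second_variation K ?y w M N"
    unfolding second_variation_def d11_def d12_def d22_def C2_fun2_pd_commute[OF K]
    by (rule sum.cong) (simp_all add: algebra_simps power2_eq_square)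
  ultimately show ?thesis by simp
qed

lemma first_variation_config:
  assumes "config K s" "M < N" "w M = 0" "w N = 0"
  shows "first_variation K s w M N = 0"
proof -
  have "first_variation K s w M N
      = (\<Sum>n\<in>{M..<N}. pd1 K (s n) (s (n + 1)) * w n + pd2 K (s (n + 1 - 1)) (s (n + 1)) * w (n + 1))"
    by (simp add: first_variation_def)
  also have "\<dots> = (\<Sum>k\<in>{M + 1..<N}. pd1 K (s k) (s (k + 1)) * w k + pd2 K (s (k - 1)) (s k) * w k)"
    using sum_regroup_shift[OF assms(2), of "\<lambda>n. pd1 K (s n) (s (n + 1)) * w n"
        "\<lambda>k. pd2 K (s (k - 1)) (s k) * w k"] assms(3,4)
    by simp
  also have "\<dots> = 0"
    using assms(1) unfolding config_def
    by (intro sum.neutral) (metis add.commute distrib_right mult_zero_left)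
  finally show ?thesis .
qed

lemma action_increases_of_second_variation_pos:
  assumes K: "C2_fun2 K" and s: "config K s" and "M < N" "w M = 0" "w N = 0"
    and Q: "second_variation K s w M N > 0" and "\<delta> > 0"
  obtains t where "0 < t" "t < \<delta>" "action K s M N < action K (\<lambda>n. s n + t * w n) M N"
proof -
  define \<phi> where "\<phi> t = action K (\<lambda>n. s n + t * w n) M N" for t
  define \<phi>' where "\<phi>' t = first_variation K (\<lambda>n. s n + t * w n) w M N" for t
  have d\<phi>: "(\<phi> has_real_derivative \<phi>' t) (at t)" for t
    unfolding \<phi>_def \<phi>'_def by (rule has_real_derivative_action) (use K in \<open>simp add: C2_fun2_def\<close>)
  have d\<phi>': "(\<phi>' has_real_derivative second_variation K s w M N) (at 0)"
    using has_real_derivative_first_variation[OF K, where t=0 and X=UNIV] unfolding \<phi>'_def by simp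
  have "\<phi>' 0 = 0" unfolding \<phi>'_def using first_variation_config[OF s assms(3-5)] by simp
  then obtain d where d: "d > 0" "\<And>h. 0 < h \<Longrightarrow> h < d \<Longrightarrow> \<phi>' h > 0"
    using DERIV_pos_inc_right[OF d\<phi>' Q] by force
  define t where "t = min (d / 2) (\<delta> / 2)"
  have t: "0 < t" "t < d" "t < \<delta>" using d \<open>\<delta> > 0\<close> by (auto simp: t_def)
  have "\<exists>z. 0 < z \<and> z < t \<and> \<phi> t - \<phi> 0 = (t - 0) * \<phi>' z"
    by (rule MVT2) (use t d\<phi> in auto)
  then obtain z where "0 < z" "z < t" "\<phi> t - \<phi> 0 = t * \<phi>' z" by auto
  moreover have "\<phi>' z > 0" using d(2) \<open>0 < z\<close> \<open>z < t\<close> t by simp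
  ultimately have "\<phi> 0 < \<phi> t" using t by (simp add: algebra_simps)
  then show thesis using that t by (simp add: \<phi>_def)
qed

lemma action_le_of_second_variation_nonpos:
  assumes K: "C2_fun2 K" and s: "config K s" and "M < N" "w M = 0" "w N = 0"
    and Q: "\<And>t. 0 \<le> t \<Longrightarrow> t \<le> 1 \<Longrightarrow> second_variation K (\<lambda>n. s n + t * w n) w M N \<le> 0"
  shows "action K (\<lambda>n. s n + w n) M N \<le> action K s M N"
proof -
  define \<phi> where "\<phi> t = action K (\<lambda>n. s n + t * w n) M N" for t
  define \<phi>' where "\<phi>' t = first_variation K (\<lambda>n. s n + t * w n) w M N" for t
  have d\<phi>: "(\<phi> has_real_derivative \<phi>' t) (at t)" for t
    unfolding \<phi>_def \<phi>'_def by (rule has_real_derivative_action) (use K in \<open>simp add: C2_fun2_def\<close>)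
  have d\<phi>': "(\<phi>' has_real_derivative second_variation K (\<lambda>n. s n + t * w n) w M N) (at t)" for t
    unfolding \<phi>'_def by (rule has_real_derivative_first_variation[OF K])
  have "\<phi>' 0 = 0" unfolding \<phi>'_def using first_variation_config[OF s assms(3-5)] by simp
  have \<phi>'_nonpos: "\<phi>' t \<le> 0" if "0 \<le> t" "t \<le> 1" for t
  proof -
    have "\<phi>' t \<le> \<phi>' 0"
      by (rule DERIV_nonpos_imp_nonincreasing[OF that(1)]) (use d\<phi>' Q that in force)
    with \<open>\<phi>' 0 = 0\<close> show ?thesis by simp
  qed
  have "\<phi> 1 \<le> \<phi> 0"
    by (rule DERIV_nonpos_imp_nonincreasing) (use d\<phi> \<phi>'_nonpos in force)+
  then show ?thesis by (simp add: \<phi>_def)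
qed

lemma m_config_second_variation_nonpos:
  assumes K: "C2_fun2 K" and mc: "m_config K s" and "M < N"
    and w_out: "\<And>n. n \<notin> {M<..<N} \<Longrightarrow> w n = 0"
  shows "second_variation K s w M N \<le> 0"
proof (rule ccontr)
  assume "\<not> second_variation K s w M N \<le> 0"
  then have Q: "second_variation K s w M N > 0" by simp
  obtain \<epsilon> where "\<epsilon> > 0" and max: "\<And>x. (\<forall>n. n \<notin> {M<..<N} \<longrightarrow> x n = s n) \<Longrightarrow>
      (\<forall>n\<in>{M<..<N}. \<bar>x n - s n\<bar> < \<epsilon>) \<Longrightarrow> action K x M N \<le> action K s M N"
    using mc \<open>M < N\<close> unfolding m_config_def action_def by blast
  define S where "S = (\<Sum>n\<in>{M<..<N}. \<bar>w n\<bar>)"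
  have "S \<ge> 0" unfolding S_def by (rule sum_nonneg) simp
  have "config K s" using mc by (simp add: m_config_def)
  moreover have "w M = 0" "w N = 0" using w_out by simp_all
  moreover have "\<epsilon> / (S + 1) > 0" using \<open>\<epsilon> > 0\<close> \<open>S \<ge> 0\<close> by simp
  ultimately obtain t where t: "0 < t" "t < \<epsilon> / (S + 1)"
    and gt: "action K s M N < action K (\<lambda>n. s n + t * w n) M N"
    using action_increases_of_second_variation_pos[OF K _ \<open>M < N\<close> _ _ Q] by blast
  have "\<bar>t * w n\<bar> < \<epsilon>" if "n \<in> {M<..<N}" for n
  proof -
    have "\<bar>w n\<bar> \<le> S" unfolding S_def by (rule member_le_sum) (use that in auto)
    then have "t * \<bar>w n\<bar> \<le> t * S" using t by (simp add: mult_left_mono)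
    also have "\<dots> \<le> \<epsilon> / (S + 1) * S" using t \<open>S \<ge> 0\<close> by (intro mult_right_mono) auto
    also have "\<dots> < \<epsilon>" using \<open>S \<ge> 0\<close> \<open>\<epsilon> > 0\<close> by (simp add: field_simps)
    finally show ?thesis using t by (simp add: abs_mult)
  qed
  then have "action K (\<lambda>n. s n + t * w n) M N \<le> action K s M N"
    by (intro max) (simp_all add: w_out)
  with gt show False by simp
qed

text \<open>Test variation: the Jacobi field cut off at its first non-positive value \<open>f N\<close>,
  with the value at \<open>N\<close> replaced by a small \<open>\<sigma> > 0\<close>.\<close>
lemma truncated_jacobi_field_second_variation_pos:
  assumes pos: "\<And>n. d12 K s n > 0" and f: "jacobi_field K s j f" "f j = 0"
    and f_pos: "\<And>k. j < k \<Longrightarrow> k < N \<Longrightarrow> f k > 0" and "f N \<le> 0" and "j + 2 \<le> N"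
  obtains w where "\<And>n. n \<notin> {j<..<N + 1} \<Longrightarrow> w n = 0" "second_variation K s w j (N + 1) > 0"
proof -
  define c where "c = d12 K s (N - 1) * f (N - 1)"
  have c: "c > 0" unfolding c_def using pos f_pos[of "N - 1"] \<open>j + 2 \<le> N\<close> by simp
  define D where "D = d22 K s (N - 1) + d11 K s N"
  define \<sigma> where "\<sigma> = c / (\<bar>D\<bar> + 1)"
  have \<sigma>: "\<sigma> > 0" "\<bar>D\<bar> * \<sigma> < c"
    using c by (simp_all add: \<sigma>_def field_simps)
  define w where "w k = (if j < k \<and> k < N then f k else if k = N then \<sigma> else 0)" for k
  have w_f: "w k = f k" if "j \<le> k" "k < N" for k
    using that f(2) by (cases "k = j") (auto simp: w_def)
  have w_out: "w n = 0" if "n \<notin> {j<..<N + 1}" for n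
    using that \<open>j + 2 \<le> N\<close> by (auto simp: w_def)
  have jac_f: "jacobi_op K s f k = 0" if "j < k" for k
    using f(1) that by (simp add: jacobi_field_def)
  have sum_0: "(\<Sum>k\<in>{j + 1..<N - 1}. w k * jacobi_op K s w k) = 0"
  proof (rule sum.neutral, intro ballI)
    fix k assume k: "k \<in> {j + 1..<N - 1}"
    have "jacobi_op K s w k = jacobi_op K s f k" unfolding jacobi_op_def using k by (simp add: w_f)
    then show "w k * jacobi_op K s w k = 0" using jac_f[of k] k by simp
  qed
  have op_N1: "jacobi_op K s w (N - 1) = d12 K s (N - 1) * (\<sigma> - f N)"
    using jac_f[of "N - 1"] w_f[of "N - 2"] w_f[of "N - 1"] \<open>j + 2 \<le> N\<close>
    unfolding jacobi_op_def by (simp add: w_def algebra_simps)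
  have op_N: "jacobi_op K s w N = c + D * \<sigma>"
    using w_f[of "N - 1"] \<open>j + 2 \<le> N\<close> unfolding jacobi_op_def c_def D_def by (simp add: w_def)
  have "second_variation K s w j (N + 1) = (\<Sum>k\<in>{j + 1..<N + 1}. w k * jacobi_op K s w k)"
    by (rule second_variation_eq_sum_jacobi_op) (use \<open>j + 2 \<le> N\<close> w_out in auto)
  also have "\<dots> = w N * jacobi_op K s w N + w (N - 1) * jacobi_op K s w (N - 1)"
  proof -
    let ?g = "\<lambda>k. w k * jacobi_op K s w k"
    have "sum ?g {j + 1..<N + 1} = ?g N + sum ?g {j + 1..<N}"
      by (rule sum_int_insert_top) (use \<open>j + 2 \<le> N\<close> in simp)
    moreover have "sum ?g {j + 1..<N - 1 + 1} = ?g (N - 1) + sum ?g {j + 1..<N - 1}"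
      by (rule sum_int_insert_top) (use \<open>j + 2 \<le> N\<close> in simp)
    ultimately show ?thesis using sum_0 by simp
  qed
  also have "\<dots> = \<sigma> * (c + D * \<sigma>) + c * \<sigma> - c * f N"
    unfolding op_N op_N1 using w_f[of "N - 1"] \<open>j + 2 \<le> N\<close> by (simp add: w_def c_def algebra_simps)
  also have "\<dots> > 0"
  proof -
    have "c + D * \<sigma> > 0" using \<sigma> abs_ge_minus_self[of D] mult_right_mono[of "- D" "\<bar>D\<bar>" \<sigma>] by linarith
    then have "\<sigma> * (c + D * \<sigma>) > 0" using \<sigma> by simp
    moreover have "c * \<sigma> > 0" "c * f N \<le> 0" using c \<sigma> \<open>f N \<le> 0\<close> by (simp_all add: mult_nonneg_nonpos)
    ultimately show ?thesis by linarith
  qed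
  finally show thesis using that w_out by blast
qed

lemma m_config_no_conjugate_points:
  assumes K: "C2_fun2 K" and twist: "\<And>a b. pd2 (pd1 K) a b > 0" and mc: "m_config K s"
  shows "no_conjugate_points K s"
  unfolding no_conjugate_points_def
proof (intro allI impI)
  fix j f n assume f: "jacobi_field K s j f" "f j = 0" "f (j + 1) > 0" and "n > j"
  have pos: "\<And>n. d12 K s n > 0" using twist by (simp add: d12_def)
  show "f n > 0"
  proof (rule ccontr)
    assume "\<not> f n > 0"
    then have "\<exists>m::nat. f (j + 1 + int m) \<le> 0"
      using \<open>n > j\<close> by (intro exI[of _ "nat (n - j - 1)"]) simp
    then obtain m where m: "f (j + 1 + int m) \<le> 0" "\<And>k. k < m \<Longrightarrow> f (j + 1 + int k) > 0"
      using exists_least_iff[of "\<lambda>m. f (j + 1 + int m) \<le> 0"] by (metis not_le)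
    define N where "N = j + 1 + int m"
    have "m > 0" using m(1) f(3) by (cases m) auto
    then have "j + 2 \<le> N" by (simp add: N_def)
    have "f k > 0" if "j < k" "k < N" for k
      using m(2)[of "nat (k - j - 1)"] that by (simp add: N_def)
    then obtain w where "\<And>n. n \<notin> {j<..<N + 1} \<Longrightarrow> w n = 0" "second_variation K s w j (N + 1) > 0"
      using truncated_jacobi_field_second_variation_pos[OF pos f(1,2) _ _ \<open>j + 2 \<le> N\<close>] m(1)
      by (auto simp: N_def)
    with m_config_second_variation_nonpos[OF K mc, of j "N + 1" w] \<open>j + 2 \<le> N\<close> show False
      by simp
  qed
qed

section \<open>Configurations without conjugate points are maximizing\<close>

lemma sum_int_telescope:
  fixes h :: "int \<Rightarrow> real"
  shows "M \<le> k \<Longrightarrow> h k - h M = (\<Sum>n\<in>{M..<k}. h (n + 1) - h n)"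
proof (induction k rule: int_ge_induct)
  case (step i)
  then have "{M..<i + 1} = insert i {M..<i}" by auto
  then show ?case using step by simp
qed simp

lemma discrete_poincare:
  fixes h :: "int \<Rightarrow> real"
  assumes "h M = 0" and "M \<le> N"
  shows "(\<Sum>k\<in>{M + 1..<N}. (h k)\<^sup>2) \<le> (of_int (N - M))\<^sup>2 * (\<Sum>n\<in>{M..<N}. (h (n + 1) - h n)\<^sup>2)"
proof -
  define S where "S = (\<Sum>n\<in>{M..<N}. (h (n + 1) - h n)\<^sup>2)"
  have "S \<ge> 0" unfolding S_def by (rule sum_nonneg) simp
  have each: "(h k)\<^sup>2 \<le> of_int (N - M) * S" if k: "k \<in> {M + 1..<N}" for k
  proof -
    have "h k = (\<Sum>n\<in>{M..<k}. h (n + 1) - h n)" using sum_int_telescope[of M k h] assms k by simp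
    then have "(h k)\<^sup>2 \<le> (\<Sum>n\<in>{M..<k}. (h (n + 1) - h n)\<^sup>2) * card {M..<k}"
      using sum_squared_le_sum_of_squares[of "\<lambda>n. h (n + 1) - h n" "{M..<k}"] by simp
    also have "\<dots> \<le> S * of_int (N - M)"
    proof (rule mult_mono)
      show "(\<Sum>n\<in>{M..<k}. (h (n + 1) - h n)\<^sup>2) \<le> S"
        unfolding S_def by (rule sum_mono2) (use k in auto)
    qed (use k \<open>S \<ge> 0\<close> in auto)
    finally show ?thesis by (simp add: mult.commute)
  qed
  have "(\<Sum>k\<in>{M + 1..<N}. (h k)\<^sup>2) \<le> (\<Sum>k\<in>{M + 1..<N}. of_int (N - M) * S)"
    by (rule sum_mono) (rule each)
  also have "\<dots> = real (card {M + 1..<N}) * (of_int (N - M) * S)" by simp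
  also have "\<dots> \<le> of_int (N - M) * (of_int (N - M) * S)"
    by (rule mult_right_mono) (use assms \<open>S \<ge> 0\<close> in auto)
  finally show ?thesis by (simp add: S_def power2_eq_square mult.assoc)
qed

lemma picone_term:
  fixes g g' w w' A B C :: real
  assumes "g \<noteq> 0" "g' \<noteq> 0"
  shows "A * w\<^sup>2 + 2 * B * w * w' + C * w'\<^sup>2
    = (w / g)\<^sup>2 * g * (A * g + B * g') + (w' / g')\<^sup>2 * g' * (B * g + C * g')
      - B * g * g' * (w' / g' - w / g)\<^sup>2"
proof -
  define a b where "a = w / g" and "b = w' / g'"
  then have "w = g * a" "w' = g' * b" using assms by simp_all
  then show ?thesis unfolding a_def[symmetric] b_def[symmetric] by (simp add: algebra_simps power2_eq_square)
qed

lemma second_variation_picone: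
  assumes "M < N" and g_nz: "\<And>k. M \<le> k \<Longrightarrow> k \<le> N \<Longrightarrow> g k \<noteq> 0" and "w M = 0" "w N = 0"
  shows "second_variation K s w M N = (\<Sum>k\<in>{M + 1..<N}. (w k / g k)\<^sup>2 * g k * jacobi_op K s g k)
     - (\<Sum>n\<in>{M..<N}. d12 K s n * g n * g (n + 1) * (w (n + 1) / g (n + 1) - w n / g n)\<^sup>2)"
proof -
  define F where "F n = (w n / g n)\<^sup>2 * g n * (d11 K s n * g n + d12 K s n * g (n + 1))" for n
  define G where "G k = (w k / g k)\<^sup>2 * g k * (d12 K s (k - 1) * g (k - 1) + d22 K s (k - 1) * g k)" for k
  have "second_variation K s w M N = (\<Sum>n\<in>{M..<N}. (F n + G (n + 1))
      - d12 K s n * g n * g (n + 1) * (w (n + 1) / g (n + 1) - w n / g n)\<^sup>2)"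
    unfolding second_variation_def
  proof (rule sum.cong)
    fix n assume "n \<in> {M..<N}"
    then have "g n \<noteq> 0" "g (n + 1) \<noteq> 0" using g_nz by auto
    from picone_term[OF this, of "d11 K s n" "w n" "d12 K s n" "w (n + 1)" "d22 K s n"]
    show "d11 K s n * (w n)\<^sup>2 + 2 * d12 K s n * w n * w (n + 1) + d22 K s n * (w (n + 1))\<^sup>2
       = (F n + G (n + 1)) - d12 K s n * g n * g (n + 1) * (w (n + 1) / g (n + 1) - w n / g n)\<^sup>2"
      unfolding F_def G_def by simp
  qed simp
  also have "\<dots> = (\<Sum>n\<in>{M..<N}. F n + G (n + 1))
      - (\<Sum>n\<in>{M..<N}. d12 K s n * g n * g (n + 1) * (w (n + 1) / g (n + 1) - w n / g n)\<^sup>2)"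
    by (simp add: sum_subtractf)
  also have "(\<Sum>n\<in>{M..<N}. F n + G (n + 1)) = F M + G N + (\<Sum>k\<in>{M + 1..<N}. F k + G k)"
    by (rule sum_regroup_shift[OF \<open>M < N\<close>])
  also have "\<dots> = (\<Sum>k\<in>{M + 1..<N}. (w k / g k)\<^sup>2 * g k * jacobi_op K s g k)"
    using \<open>w M = 0\<close> \<open>w N = 0\<close> unfolding F_def G_def jacobi_op_def by (simp add: algebra_simps)
  finally show ?thesis .
qed

text \<open>Picone's identity with \<open>h = w / g\<close> and the Poincare inequality for \<open>h\<close>: the second
  sum dominates as soon as the twist term \<open>\<beta>\<close> beats \<open>\<eta> (N - M)\<^sup>2\<close>.\<close>
lemma second_variation_nonpos:
  assumes "M < N" and g_pos: "\<And>k. M \<le> k \<Longrightarrow> k \<le> N \<Longrightarrow> g k > 0" and "w M = 0" "w N = 0"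
    and op_le: "\<And>k. M < k \<Longrightarrow> k < N \<Longrightarrow> g k * jacobi_op K s g k \<le> \<eta>"
    and twist_ge: "\<And>n. M \<le> n \<Longrightarrow> n < N \<Longrightarrow> d12 K s n * g n * g (n + 1) \<ge> \<beta>"
    and "\<eta> \<ge> 0" and \<eta>\<beta>: "\<eta> * (of_int (N - M))\<^sup>2 \<le> \<beta>"
  shows "second_variation K s w M N \<le> 0"
proof -
  define h where "h k = w k / g k" for k
  define S where "S = (\<Sum>n\<in>{M..<N}. (h (n + 1) - h n)\<^sup>2)"
  have "S \<ge> 0" unfolding S_def by (rule sum_nonneg) simp
  have "h M = 0" using \<open>w M = 0\<close> by (simp add: h_def)
  have g_nz: "\<And>k. M \<le> k \<Longrightarrow> k \<le> N \<Longrightarrow> g k \<noteq> 0" using g_pos by (metis less_irrefl)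
  have "(\<Sum>k\<in>{M + 1..<N}. (h k)\<^sup>2 * (g k * jacobi_op K s g k)) \<le> (\<Sum>k\<in>{M + 1..<N}. (h k)\<^sup>2 * \<eta>)"
    by (rule sum_mono) (auto intro!: mult_left_mono op_le)
  also have "\<dots> = \<eta> * (\<Sum>k\<in>{M + 1..<N}. (h k)\<^sup>2)" by (simp add: sum_distrib_left mult.commute)
  also have "\<dots> \<le> \<eta> * ((of_int (N - M))\<^sup>2 * S)"
    unfolding S_def using discrete_poincare[where h=h and M=M and N=N, OF \<open>h M = 0\<close>] \<open>M < N\<close> \<open>\<eta> \<ge> 0\<close>
    by (intro mult_left_mono) auto
  also have "\<dots> \<le> \<beta> * S" using \<eta>\<beta> \<open>S \<ge> 0\<close> by (simp add: mult.assoc[symmetric] mult_right_mono)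
  also have "\<dots> = (\<Sum>n\<in>{M..<N}. \<beta> * (h (n + 1) - h n)\<^sup>2)" by (simp add: S_def sum_distrib_left)
  also have "\<dots> \<le> (\<Sum>n\<in>{M..<N}. d12 K s n * g n * g (n + 1) * (h (n + 1) - h n)\<^sup>2)"
    by (rule sum_mono) (auto intro!: mult_right_mono twist_ge)
  finally show ?thesis
    using second_variation_picone[OF \<open>M < N\<close> g_nz \<open>w M = 0\<close> \<open>w N = 0\<close>, where K=K and s=s]
    unfolding h_def by (simp add: mult.assoc)
qed

lemma continuous_on_fun2_box_finite:
  fixes F :: "real \<Rightarrow> real \<Rightarrow> real" and a b :: "'i \<Rightarrow> real"
  assumes cont: "continuous_on UNIV (\<lambda>z. F (fst z) (snd z))" and "finite I" and "\<theta> > 0"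
  obtains \<epsilon> where "\<epsilon> > 0"
    "\<And>i x y. i \<in> I \<Longrightarrow> \<bar>x - a i\<bar> < \<epsilon> \<Longrightarrow> \<bar>y - b i\<bar> < \<epsilon> \<Longrightarrow> \<bar>F x y - F (a i) (b i)\<bar> < \<theta>"
proof -
  have "\<exists>\<epsilon>>0. \<forall>i\<in>I. \<forall>x y. \<bar>x - a i\<bar> < \<epsilon> \<longrightarrow> \<bar>y - b i\<bar> < \<epsilon> \<longrightarrow> \<bar>F x y - F (a i) (b i)\<bar> < \<theta>"
    using \<open>finite I\<close>
  proof induct
    case empty then show ?case by (intro exI[of _ 1]) simp
  next
    case (insert i I)
    then obtain e1 where "e1 > 0" "\<forall>i\<in>I. \<forall>x y. \<bar>x - a i\<bar> < e1 \<longrightarrow> \<bar>y - b i\<bar> < e1 \<longrightarrow>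
        \<bar>F x y - F (a i) (b i)\<bar> < \<theta>" by blast
    moreover obtain e2 where "e2 > 0" "\<And>x y. \<bar>x - a i\<bar> < e2 \<Longrightarrow> \<bar>y - b i\<bar> < e2 \<Longrightarrow>
        \<bar>F x y - F (a i) (b i)\<bar> < \<theta>"
      using continuous_on_fun2_box[OF cont \<open>\<theta> > 0\<close>] by blast
    ultimately show ?case by (intro exI[of _ "min e1 e2"]) auto
  qed
  with that show thesis by blast
qed

lemma d_coefficients_close:
  assumes K: "C2_fun2 K" and "\<theta> > 0"
  obtains \<epsilon> where "\<epsilon> > 0"
    "\<And>y n. n \<in> {M..<N} \<Longrightarrow> \<bar>y n - s n\<bar> < \<epsilon> \<Longrightarrow> \<bar>y (n + 1) - s (n + 1)\<bar> < \<epsilon> \<Longrightarrow>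
       \<bar>d11 K y n - d11 K s n\<bar> < \<theta> \<and> \<bar>d12 K y n - d12 K s n\<bar> < \<theta> \<and> \<bar>d22 K y n - d22 K s n\<bar> < \<theta>"
proof -
  have c: "continuous_on UNIV (\<lambda>z. pd1 (pd1 K) (fst z) (snd z))"
    "continuous_on UNIV (\<lambda>z. pd2 (pd1 K) (fst z) (snd z))"
    "continuous_on UNIV (\<lambda>z. pd2 (pd2 K) (fst z) (snd z))"
    using K unfolding C2_fun2_def C1_fun2_def by auto
  note close = continuous_on_fun2_box_finite[OF _ finite_atLeastLessThan_int[of M N] \<open>\<theta> > 0\<close>,
      where a=s and b="\<lambda>n. s (n + 1)"]
  obtain e1 where "e1 > 0" "\<And>n x y. n \<in> {M..<N} \<Longrightarrow> \<bar>x - s n\<bar> < e1 \<Longrightarrow> \<bar>y - s (n + 1)\<bar> < e1 \<Longrightarrow>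
       \<bar>pd1 (pd1 K) x y - pd1 (pd1 K) (s n) (s (n + 1))\<bar> < \<theta>"
    using close[OF c(1)] by blast
  moreover obtain e2 where "e2 > 0" "\<And>n x y. n \<in> {M..<N} \<Longrightarrow> \<bar>x - s n\<bar> < e2 \<Longrightarrow> \<bar>y - s (n + 1)\<bar> < e2 \<Longrightarrow>
       \<bar>pd2 (pd1 K) x y - pd2 (pd1 K) (s n) (s (n + 1))\<bar> < \<theta>"
    using close[OF c(2)] by blast
  moreover obtain e3 where "e3 > 0" "\<And>n x y. n \<in> {M..<N} \<Longrightarrow> \<bar>x - s n\<bar> < e3 \<Longrightarrow> \<bar>y - s (n + 1)\<bar> < e3 \<Longrightarrow>
       \<bar>pd2 (pd2 K) x y - pd2 (pd2 K) (s n) (s (n + 1))\<bar> < \<theta>"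
    using close[OF c(3)] by blast
  ultimately show thesis
    by (intro that[of "min e1 (min e2 e3)"]) (auto simp: d11_def d12_def d22_def)
qed

lemma jacobi_op_perturbation:
  fixes \<theta> Gs :: real
  assumes close: "\<And>n. n \<in> {k - 1, k} \<Longrightarrow> \<bar>d11 K y n - d11 K s n\<bar> \<le> \<theta> \<and>
                  \<bar>d12 K y n - d12 K s n\<bar> \<le> \<theta> \<and> \<bar>d22 K y n - d22 K s n\<bar> \<le> \<theta>"
    and g: "\<And>i. i \<in> {k - 1, k, k + 1} \<Longrightarrow> 0 \<le> g i \<and> g i \<le> Gs"
  shows "\<bar>jacobi_op K y g k - jacobi_op K s g k\<bar> \<le> 4 * \<theta> * Gs"
proof -
  have bound: "\<bar>a * b\<bar> \<le> \<theta> * Gs" if "\<bar>a\<bar> \<le> \<theta>" "0 \<le> b" "b \<le> Gs" for a b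
    using that by (simp add: abs_mult mult_mono)
  have "jacobi_op K y g k - jacobi_op K s g k
      = (d12 K y (k - 1) - d12 K s (k - 1)) * g (k - 1) + (d22 K y (k - 1) - d22 K s (k - 1)) * g k
        + (d11 K y k - d11 K s k) * g k + (d12 K y k - d12 K s k) * g (k + 1)"
    unfolding jacobi_op_def by (simp add: algebra_simps)
  then show ?thesis
    using bound[of "d12 K y (k - 1) - d12 K s (k - 1)" "g (k - 1)"]
      bound[of "d22 K y (k - 1) - d22 K s (k - 1)" "g k"] bound[of "d11 K y k - d11 K s k" "g k"]
      bound[of "d12 K y k - d12 K s k" "g (k + 1)"] close g
    by simp
qed

lemma second_variation_nonpos_perturbed:
  fixes \<theta> \<beta> Gs :: real
  assumes "M < N"
    and g: "\<And>k. M \<le> k \<Longrightarrow> k \<le> N \<Longrightarrow> 0 < g k \<and> g k \<le> Gs"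
    and g_jac: "\<And>k. M < k \<Longrightarrow> k < N \<Longrightarrow> jacobi_op K s g k = 0"
    and close: "\<And>n. M \<le> n \<Longrightarrow> n < N \<Longrightarrow> \<bar>d11 K y n - d11 K s n\<bar> \<le> \<theta> \<and>
                  \<bar>d12 K y n - d12 K s n\<bar> \<le> \<theta> \<and> \<bar>d22 K y n - d22 K s n\<bar> \<le> \<theta>"
    and twist_ge: "\<And>n. M \<le> n \<Longrightarrow> n < N \<Longrightarrow> 2 * \<beta> \<le> d12 K s n * g n * g (n + 1)"
    and "0 \<le> \<theta>" and \<theta>_small: "\<theta> * Gs\<^sup>2 * (4 * (of_int (N - M))\<^sup>2 + 1) \<le> \<beta>"
    and "w M = 0" "w N = 0"
  shows "second_variation K y w M N \<le> 0"
proof (rule second_variation_nonpos[OF \<open>M < N\<close> _ \<open>w M = 0\<close> \<open>w N = 0\<close>])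
  show "g k * jacobi_op K y g k \<le> 4 * \<theta> * Gs\<^sup>2" if k: "M < k" "k < N" for k
  proof -
    have "\<bar>jacobi_op K y g k - jacobi_op K s g k\<bar> \<le> 4 * \<theta> * Gs"
      by (rule jacobi_op_perturbation) (use close g k in \<open>auto simp: less_imp_le\<close>)
    then have "\<bar>g k * jacobi_op K y g k\<bar> \<le> Gs * (4 * \<theta> * Gs)"
      using g[of k] g_jac[OF k] k by (simp add: abs_mult mult_mono)
    then show ?thesis by (simp add: power2_eq_square algebra_simps)
  qed
  show "d12 K y n * g n * g (n + 1) \<ge> \<beta>" if n: "M \<le> n" "n < N" for n
  proof -
    have "g n * g (n + 1) \<le> Gs * Gs" using g[of n] g[of "n + 1"] n by (intro mult_mono) auto
    then have "\<bar>(d12 K y n - d12 K s n) * (g n * g (n + 1))\<bar> \<le> \<theta> * Gs\<^sup>2"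
      using close[OF n] g[of n] g[of "n + 1"] n \<open>0 \<le> \<theta>\<close>
      by (simp add: abs_mult power2_eq_square mult_mono)
    moreover have "\<theta> * Gs\<^sup>2 \<le> \<beta>"
      using \<theta>_small \<open>0 \<le> \<theta>\<close> mult_left_mono[of 1 "4 * (of_int (N - M))\<^sup>2 + 1" "\<theta> * Gs\<^sup>2"] by simp
    ultimately show ?thesis using twist_ge[OF n] by (simp add: algebra_simps abs_le_iff)
  qed
  show "0 \<le> 4 * \<theta> * Gs\<^sup>2" using \<open>0 \<le> \<theta>\<close> by simp
  have "\<theta> * Gs\<^sup>2 * (4 * (of_int (N - M))\<^sup>2 + 1) = 4 * \<theta> * Gs\<^sup>2 * (of_int (N - M))\<^sup>2 + \<theta> * Gs\<^sup>2"
    by (simp add: algebra_simps)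
  moreover have "0 \<le> \<theta> * Gs\<^sup>2" using \<open>0 \<le> \<theta>\<close> by simp
  ultimately show "4 * \<theta> * Gs\<^sup>2 * (of_int (N - M))\<^sup>2 \<le> \<beta>" using \<theta>_small by linarith
qed (use g in auto)

lemma positive_jacobi_field_on_segment:
  assumes pos: "\<And>n. d12 K s n > 0" and nc: "no_conjugate_points K s" and "M < N"
  obtains g Gs \<beta> where "jacobi_field K s (M - 1) g" "\<And>k. M \<le> k \<Longrightarrow> k \<le> N \<Longrightarrow> 0 < g k \<and> g k \<le> Gs"
    "\<beta> > 0" "\<And>n. M \<le> n \<Longrightarrow> n < N \<Longrightarrow> 2 * \<beta> \<le> d12 K s n * g n * g (n + 1)"
proof -
  have nz: "\<And>n. d12 K s n \<noteq> 0" using pos by (metis less_irrefl)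
  obtain g where g: "jacobi_field K s (M - 1) g" "g (M - 1) = 0" "g M = 1"
    using jacobi_field_exists[OF nz, of "M - 1"] by auto
  have g_pos: "g k > 0" if "k \<ge> M" for k
    using nc g that unfolding no_conjugate_points_def by auto
  define Gs where "Gs = (\<Sum>k\<in>{M..N}. g k)"
  have g_le: "g k \<le> Gs" if "M \<le> k" "k \<le> N" for k
    unfolding Gs_def by (rule member_le_sum) (use that in \<open>auto intro: less_imp_le g_pos\<close>)
  define V where "V = (\<lambda>n. d12 K s n * g n * g (n + 1)) ` {M..<N}"
  have V: "finite V" "V \<noteq> {}" using \<open>M < N\<close> by (auto simp: V_def)
  obtain n where "n \<in> {M..<N}" "Min V = d12 K s n * g n * g (n + 1)"
    using Min_in[OF V] unfolding V_def by auto
  then have \<beta>: "Min V / 2 > 0" using pos[of n] g_pos[of n] g_pos[of "n + 1"] by simp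
  have twist_ge: "2 * (Min V / 2) \<le> d12 K s n * g n * g (n + 1)" if "M \<le> n" "n < N" for n
    using Min_le[OF V(1), of "d12 K s n * g n * g (n + 1)"] that by (simp add: V_def)
  show thesis by (rule that[OF g(1) _ \<beta> twist_ge, of Gs]) (simp_all add: g_pos g_le)
qed

text \<open>The Picone estimate survives perturbation: the coefficients along nearby segments are
  uniformly close to those along \<open>s\<close>, while \<open>g\<close> keeps solving the Jacobi equation of \<open>s\<close>.\<close>
lemma second_variation_nonpos_near:
  assumes K: "C2_fun2 K" and pos: "\<And>n. d12 K s n > 0" and nc: "no_conjugate_points K s"
    and "M < N"
  obtains \<epsilon> where "\<epsilon> > 0" "\<And>y w. (\<And>n. M \<le> n \<Longrightarrow> n \<le> N \<Longrightarrow> \<bar>y n - s n\<bar> < \<epsilon>) \<Longrightarrow>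
      w M = 0 \<Longrightarrow> w N = 0 \<Longrightarrow> second_variation K y w M N \<le> 0"
proof -
  obtain g Gs \<beta> where g: "jacobi_field K s (M - 1) g" "\<And>k. M \<le> k \<Longrightarrow> k \<le> N \<Longrightarrow> 0 < g k \<and> g k \<le> Gs"
    and "\<beta> > 0" and twist_ge: "\<And>n. M \<le> n \<Longrightarrow> n < N \<Longrightarrow> 2 * \<beta> \<le> d12 K s n * g n * g (n + 1)"
    using positive_jacobi_field_on_segment[OF pos nc \<open>M < N\<close>] by blast
  define C where "C = Gs\<^sup>2 * (4 * (of_int (N - M))\<^sup>2 + 1)"
  have "C \<ge> 0" by (simp add: C_def)
  define \<theta> where "\<theta> = \<beta> / (C + 1)"
  have "\<theta> > 0" using \<open>\<beta> > 0\<close> \<open>C \<ge> 0\<close> by (simp add: \<theta>_def)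
  have "\<theta> * C \<le> \<beta>" using \<open>\<beta> > 0\<close> \<open>C \<ge> 0\<close> by (simp add: \<theta>_def field_simps)
  then have \<theta>_small: "\<theta> * Gs\<^sup>2 * (4 * (of_int (N - M))\<^sup>2 + 1) \<le> \<beta>"
    by (simp add: C_def mult.assoc)
  obtain \<epsilon> where "\<epsilon> > 0" and close: "\<And>y n. n \<in> {M..<N} \<Longrightarrow> \<bar>y n - s n\<bar> < \<epsilon> \<Longrightarrow>
      \<bar>y (n + 1) - s (n + 1)\<bar> < \<epsilon> \<Longrightarrow>
      \<bar>d11 K y n - d11 K s n\<bar> < \<theta> \<and> \<bar>d12 K y n - d12 K s n\<bar> < \<theta> \<and> \<bar>d22 K y n - d22 K s n\<bar> < \<theta>"
    using d_coefficients_close[OF K \<open>\<theta> > 0\<close>] by blast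
  show thesis
  proof (rule that[OF \<open>\<epsilon> > 0\<close>])
    fix y w :: "int \<Rightarrow> real"
    assume y: "\<And>n. M \<le> n \<Longrightarrow> n \<le> N \<Longrightarrow> \<bar>y n - s n\<bar> < \<epsilon>" and "w M = 0" "w N = 0"
    show "second_variation K y w M N \<le> 0"
    proof (rule second_variation_nonpos_perturbed[OF \<open>M < N\<close> g(2) _ _ twist_ge _ \<theta>_small \<open>w M = 0\<close> \<open>w N = 0\<close>])
      show "jacobi_op K s g k = 0" if "M < k" "k < N" for k
        using g(1) that by (simp add: jacobi_field_def)
      show "\<bar>d11 K y n - d11 K s n\<bar> \<le> \<theta> \<and> \<bar>d12 K y n - d12 K s n\<bar> \<le> \<theta> \<and> \<bar>d22 K y n - d22 K s n\<bar> \<le> \<theta>"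
        if "M \<le> n" "n < N" for n
        using close[of n y] y[of n] y[of "n + 1"] that by fastforce
    qed (use \<open>\<theta> > 0\<close> in auto)
  qed
qed

lemma no_conjugate_points_m_config:
  assumes K: "C2_fun2 K" and twist: "\<And>a b. pd2 (pd1 K) a b > 0"
    and s: "config K s" and nc: "no_conjugate_points K s"
  shows "m_config K s"
  unfolding m_config_def
proof (intro conjI s allI impI)
  fix M N :: int assume "M < N"
  have pos: "\<And>n. d12 K s n > 0" using twist by (simp add: d12_def)
  obtain \<epsilon> where "\<epsilon> > 0" and Q: "\<And>y w. (\<And>n. M \<le> n \<Longrightarrow> n \<le> N \<Longrightarrow> \<bar>y n - s n\<bar> < \<epsilon>) \<Longrightarrow>
      w M = 0 \<Longrightarrow> w N = 0 \<Longrightarrow> second_variation K y w M N \<le> 0"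
    using second_variation_nonpos_near[OF K pos nc \<open>M < N\<close>] by blast
  show "\<exists>\<epsilon>>0. \<forall>x. (\<forall>n. n \<notin> {M<..<N} \<longrightarrow> x n = s n) \<and> (\<forall>n\<in>{M<..<N}. \<bar>x n - s n\<bar> < \<epsilon>) \<longrightarrow>
      (\<Sum>n\<in>{M..<N}. K (x n) (x (n + 1))) \<le> (\<Sum>n\<in>{M..<N}. K (s n) (s (n + 1)))"
  proof (intro exI[of _ \<epsilon>] conjI allI impI \<open>\<epsilon> > 0\<close>)
    fix x assume x: "(\<forall>n. n \<notin> {M<..<N} \<longrightarrow> x n = s n) \<and> (\<forall>n\<in>{M<..<N}. \<bar>x n - s n\<bar> < \<epsilon>)"
    define w where "w n = x n - s n" for n
    have "w M = 0" "w N = 0" using x by (auto simp: w_def)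
    have w_small: "\<bar>w n\<bar> < \<epsilon>" for n
      using x \<open>\<epsilon> > 0\<close> by (cases "n \<in> {M<..<N}") (auto simp: w_def)
    have "action K (\<lambda>n. s n + w n) M N \<le> action K s M N"
    proof (rule action_le_of_second_variation_nonpos[OF K s \<open>M < N\<close> \<open>w M = 0\<close> \<open>w N = 0\<close>])
      fix t :: real assume t: "0 \<le> t" "t \<le> 1"
      have close: "\<bar>s n + t * w n - s n\<bar> < \<epsilon>" for n
        using w_small[of n] t mult_left_le_one_le[of "\<bar>w n\<bar>" t] by (simp add: abs_mult)
      show "second_variation K (\<lambda>n. s n + t * w n) w M N \<le> 0"
        by (rule Q) (simp_all only: close \<open>w M = 0\<close> \<open>w N = 0\<close>)
    qed
    then show "(\<Sum>n\<in>{M..<N}. K (x n) (x (n + 1))) \<le> (\<Sum>n\<in>{M..<N}. K (s n) (s (n + 1)))"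
      by (simp add: action_def w_def)
  qed
qed

section \<open>Change of generating function\<close>

lemma has_vector_derivative_fst_snd:
  assumes "(f has_vector_derivative v) F"
  shows "((\<lambda>t. fst (f t)) has_real_derivative fst v) F"
    and "((\<lambda>t. snd (f t)) has_real_derivative snd v) F"
  using has_derivative_fst[OF assms[unfolded has_vector_derivative_def]]
    has_derivative_snd[OF assms[unfolded has_vector_derivative_def]]
  by (simp_all add: has_real_derivative_iff_has_vector_derivative has_vector_derivative_def)

locale twist_map_two_coordinates =
  fixes T :: "real \<times> real \<Rightarrow> real \<times> real"
    and \<Phi> :: "real \<times> real \<Rightarrow> real \<times> real"
    and D\<Phi> :: "real \<times> real \<Rightarrow> real \<times> real \<Rightarrow> real \<times> real"
    and H G :: "real \<Rightarrow> real \<Rightarrow> real"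
  assumes Phi_deriv: "\<And>z. (\<Phi> has_derivative D\<Phi> z) (at z)"
    and Phi_sympl: "\<And>z. fst (D\<Phi> z (1, 0)) * snd (D\<Phi> z (0, 1))
                        - fst (D\<Phi> z (0, 1)) * snd (D\<Phi> z (1, 0)) = 1"
    and H_C2: "C2_fun2 H" and G_C2: "C2_fun2 G"
    and H_twist: "\<And>q q'. pd2 (pd1 H) q q' > 0"
    and G_twist: "\<And>x x'. pd2 (pd1 G) x x' > 0"
    and T_gen_H: "\<And>q p q' p'. T (q, p) = (q', p') \<longleftrightarrow> p = - pd1 H q q' \<and> p' = pd2 H q q'"
    and T_gen_G: "\<And>z z'. T z = z' \<longleftrightarrow>
           snd (\<Phi> z) = - pd1 G (fst (\<Phi> z)) (fst (\<Phi> z')) \<and>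
           snd (\<Phi> z') = pd2 G (fst (\<Phi> z)) (fst (\<Phi> z'))"
begin

lemma D\<Phi>_linear: "linear (D\<Phi> z)"
  using Phi_deriv has_derivative_linear by blast

lemma D\<Phi>_coords: "D\<Phi> z (a, b) = a *\<^sub>R D\<Phi> z (1, 0) + b *\<^sub>R D\<Phi> z (0, 1)"
proof -
  have "D\<Phi> z (a, b) = D\<Phi> z (a *\<^sub>R (1, 0) + b *\<^sub>R (0, 1))" by simp
  also have "\<dots> = a *\<^sub>R D\<Phi> z (1, 0) + b *\<^sub>R D\<Phi> z (0, 1)"
    by (simp only: linear_add[OF D\<Phi>_linear] linear_scale[OF D\<Phi>_linear])
  finally show ?thesis .
qed

lemma symplectic_form_D\<Phi>: "symplectic_form (D\<Phi> z v) (D\<Phi> z w) = symplectic_form v w"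
proof -
  obtain a b c d where "v = (a, b)" "w = (c, d)" by (cases v, cases w) blast
  moreover have "symplectic_form (D\<Phi> z (a, b)) (D\<Phi> z (c, d))
      = (a * d - b * c) * (fst (D\<Phi> z (1, 0)) * snd (D\<Phi> z (0, 1)) - fst (D\<Phi> z (0, 1)) * snd (D\<Phi> z (1, 0)))"
    unfolding D\<Phi>_coords[of z a b] D\<Phi>_coords[of z c d] symplectic_form_def by (simp add: algebra_simps)
  ultimately show ?thesis by (simp add: Phi_sympl symplectic_form_def)
qed

lemma D\<Phi>_vertical_preimage: "D\<Phi> z (- fst (D\<Phi> z (0, 1)), fst (D\<Phi> z (1, 0))) = (0, 1)"
  using Phi_sympl[of z] unfolding D\<Phi>_coords[of z "- fst (D\<Phi> z (0, 1))" "fst (D\<Phi> z (1, 0))"]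
  by (simp add: prod_eq_iff algebra_simps)

lemma orbit_momenta_H:
  assumes "orbit T z"
  shows "snd (z n) = - pd1 H (fst (z n)) (fst (z (n + 1)))"
    and "snd (z (n + 1)) = pd2 H (fst (z n)) (fst (z (n + 1)))"
proof -
  have "T (fst (z n), snd (z n)) = (fst (z (n + 1)), snd (z (n + 1)))"
    using assms unfolding orbit_def by simp
  then show "snd (z n) = - pd1 H (fst (z n)) (fst (z (n + 1)))"
    and "snd (z (n + 1)) = pd2 H (fst (z n)) (fst (z (n + 1)))"
    unfolding T_gen_H by simp_all
qed

lemma orbit_momenta_G:
  assumes "orbit T z"
  shows "snd (\<Phi> (z n)) = - pd1 G (fst (\<Phi> (z n))) (fst (\<Phi> (z (n + 1))))"
    and "snd (\<Phi> (z (n + 1))) = pd2 G (fst (\<Phi> (z n))) (fst (\<Phi> (z (n + 1))))"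
proof -
  have "T (z n) = z (n + 1)" using assms unfolding orbit_def by simp
  then show "snd (\<Phi> (z n)) = - pd1 G (fst (\<Phi> (z n))) (fst (\<Phi> (z (n + 1))))"
    and "snd (\<Phi> (z (n + 1))) = pd2 G (fst (\<Phi> (z n))) (fst (\<Phi> (z (n + 1))))"
    unfolding T_gen_G by simp_all
qed

lemma config_H: "orbit T z \<Longrightarrow> config H (\<lambda>k. fst (z k))"
  unfolding config_def
proof
  fix n assume "orbit T z"
  from orbit_momenta_H(1)[OF this, of n] orbit_momenta_H(2)[OF this, of "n - 1"]
  show "pd2 H (fst (z (n - 1))) (fst (z n)) + pd1 H (fst (z n)) (fst (z (n + 1))) = 0" by simp
qed

lemma config_G: "orbit T z \<Longrightarrow> config G (\<lambda>k. fst (\<Phi> (z k)))"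
  unfolding config_def
proof
  fix n assume "orbit T z"
  from orbit_momenta_G(1)[OF this, of n] orbit_momenta_G(2)[OF this, of "n - 1"]
  show "pd2 G (fst (\<Phi> (z (n - 1)))) (fst (\<Phi> (z n))) + pd1 G (fst (\<Phi> (z n))) (fst (\<Phi> (z (n + 1)))) = 0"
    by simp
qed


lemma has_real_derivative_fst_snd_\<Phi>:
  assumes "(Y has_vector_derivative v) (at 0)"
  shows "((\<lambda>t. fst (\<Phi> (Y t))) has_real_derivative fst (D\<Phi> (Y 0) v)) (at 0)"
    and "((\<lambda>t. snd (\<Phi> (Y t))) has_real_derivative snd (D\<Phi> (Y 0) v)) (at 0)"
proof -
  have "((\<Phi> \<circ> Y) has_vector_derivative D\<Phi> (Y 0) v) (at 0 within UNIV)"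
    using vector_derivative_diff_chain_within[OF _ has_derivative_at_withinI[OF Phi_deriv]] assms
    by simp
  from has_vector_derivative_fst_snd[OF this]
  show "((\<lambda>t. fst (\<Phi> (Y t))) has_real_derivative fst (D\<Phi> (Y 0) v)) (at 0)"
    and "((\<lambda>t. snd (\<Phi> (Y t))) has_real_derivative snd (D\<Phi> (Y 0) v)) (at 0)"
    by (simp_all add: o_def)
qed

text \<open>Differentiate the two generating-function identities of \<open>G\<close> along the curve
  \<open>t \<mapsto> (a + t ua, - H\<^sub>1(a + t ua, b + t ub))\<close>, which \<open>T\<close> maps to
  \<open>t \<mapsto> (b + t ub, H\<^sub>2(a + t ua, b + t ub))\<close>.\<close>
lemma D\<Phi>_linearized_generating_G:
  fixes a b ua ub :: real
  defines "Z \<equiv> (a, - pd1 H a b)" and "Z' \<equiv> (b, pd2 H a b)"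
    and "\<xi> \<equiv> (ua, - pd1 (pd1 H) a b * ua - pd2 (pd1 H) a b * ub)"
    and "\<xi>' \<equiv> (ub, pd1 (pd2 H) a b * ua + pd2 (pd2 H) a b * ub)"
    and "X \<equiv> fst (\<Phi> (a, - pd1 H a b))" and "X' \<equiv> fst (\<Phi> (b, pd2 H a b))"
  shows "snd (D\<Phi> Z \<xi>) = - (pd1 (pd1 G) X X' * fst (D\<Phi> Z \<xi>) + pd2 (pd1 G) X X' * fst (D\<Phi> Z' \<xi>'))"
    and "snd (D\<Phi> Z' \<xi>') = pd1 (pd2 G) X X' * fst (D\<Phi> Z \<xi>) + pd2 (pd2 G) X X' * fst (D\<Phi> Z' \<xi>')"
proof -
  have H1: "C1_fun2 (pd1 H)" "C1_fun2 (pd2 H)" and G1: "C1_fun2 (pd1 G)" "C1_fun2 (pd2 G)"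
    using H_C2 G_C2 by (auto simp: C2_fun2_def)
  define Y where "Y t = (a + t * ua, - pd1 H (a + t * ua) (b + t * ub))" for t
  define Y' where "Y' t = (b + t * ub, pd2 H (a + t * ua) (b + t * ub))" for t
  have "T (Y t) = Y' t" for t unfolding Y_def Y'_def by (simp add: T_gen_H)
  then have gen: "snd (\<Phi> (Y t)) = - pd1 G (fst (\<Phi> (Y t))) (fst (\<Phi> (Y' t)))"
      "snd (\<Phi> (Y' t)) = pd2 G (fst (\<Phi> (Y t))) (fst (\<Phi> (Y' t)))" for t
    using T_gen_G by blast+
  have "Y 0 = Z" "Y' 0 = Z'" by (simp_all add: Y_def Y'_def Z_def Z'_def)
  have "(Y has_vector_derivative \<xi>) (at 0)"
    unfolding Y_def \<xi>_def
    using has_real_derivative_along_line[OF H1(1), of a ua b ub 0 UNIV]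
    by (auto intro!: has_vector_derivative_Pair derivative_eq_intros
        simp: has_real_derivative_iff_has_vector_derivative[symmetric])
  note dY = has_real_derivative_fst_snd_\<Phi>[OF this, unfolded \<open>Y 0 = Z\<close>]
  have "(Y' has_vector_derivative \<xi>') (at 0)"
    unfolding Y'_def \<xi>'_def
    using has_real_derivative_along_line[OF H1(2), of a ua b ub 0 UNIV]
    by (auto intro!: has_vector_derivative_Pair derivative_eq_intros
        simp: has_real_derivative_iff_has_vector_derivative[symmetric])
  note dY' = has_real_derivative_fst_snd_\<Phi>[OF this, unfolded \<open>Y' 0 = Z'\<close>]
  have "((\<lambda>t. - pd1 G (fst (\<Phi> (Y t))) (fst (\<Phi> (Y' t)))) has_real_derivative
      - (pd1 (pd1 G) X X' * fst (D\<Phi> Z \<xi>) + pd2 (pd1 G) X X' * fst (D\<Phi> Z' \<xi>'))) (at 0)"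
    using DERIV_minus[OF C1_fun2_chain[OF G1(1) dY(1) dY'(1)]] \<open>Y 0 = Z\<close> \<open>Y' 0 = Z'\<close>
    by (simp add: X_def X'_def Z_def Z'_def)
  then show "snd (D\<Phi> Z \<xi>) = - (pd1 (pd1 G) X X' * fst (D\<Phi> Z \<xi>) + pd2 (pd1 G) X X' * fst (D\<Phi> Z' \<xi>'))"
    using DERIV_unique[OF dY(2)] gen(1) by simp
  have "((\<lambda>t. pd2 G (fst (\<Phi> (Y t))) (fst (\<Phi> (Y' t)))) has_real_derivative
      pd1 (pd2 G) X X' * fst (D\<Phi> Z \<xi>) + pd2 (pd2 G) X X' * fst (D\<Phi> Z' \<xi>')) (at 0)"
    using C1_fun2_chain[OF G1(2) dY(1) dY'(1)] \<open>Y 0 = Z\<close> \<open>Y' 0 = Z'\<close>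
    by (simp add: X_def X'_def Z_def Z'_def)
  then show "snd (D\<Phi> Z' \<xi>') = pd1 (pd2 G) X X' * fst (D\<Phi> Z \<xi>) + pd2 (pd2 G) X X' * fst (D\<Phi> Z' \<xi>')"
    using DERIV_unique[OF dY'(2)] gen(2) by simp
qed

lemma jacobi_field_transfer:
  assumes z: "orbit T z" and u: "jacobi_field H (\<lambda>k. fst (z k)) j u"
  defines "\<xi> \<equiv> \<lambda>k. (u k, jacobi_momentum H (\<lambda>k. fst (z k)) u k)"
  shows "jacobi_field G (\<lambda>k. fst (\<Phi> (z k))) j (\<lambda>k. fst (D\<Phi> (z k) (\<xi> k)))"
    and "\<And>k. j \<le> k \<Longrightarrow>
      snd (D\<Phi> (z k) (\<xi> k)) = jacobi_momentum G (\<lambda>k. fst (\<Phi> (z k))) (\<lambda>k. fst (D\<Phi> (z k) (\<xi> k))) k"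
proof -
  let ?q = "\<lambda>k. fst (z k)" and ?x = "\<lambda>k. fst (\<Phi> (z k))" and ?v = "\<lambda>k. fst (D\<Phi> (z k) (\<xi> k))"
  have step: "snd (D\<Phi> (z n) (\<xi> n)) = jacobi_momentum G ?x ?v n"
      "snd (D\<Phi> (z (n + 1)) (\<xi> (n + 1))) = d12 G ?x n * ?v n + d22 G ?x n * ?v (n + 1)"
    if "j \<le> n" for n
  proof -
    define a b where "a = ?q n" and "b = ?q (n + 1)"
    have Z: "z n = (a, - pd1 H a b)" and Z': "z (n + 1) = (b, pd2 H a b)"
      using orbit_momenta_H[OF z, of n] by (simp_all add: a_def b_def prod_eq_iff)
    have \<xi>n: "\<xi> n = (u n, - pd1 (pd1 H) a b * u n - pd2 (pd1 H) a b * u (n + 1))"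
      by (simp add: \<xi>_def jacobi_momentum_def d11_def d12_def a_def b_def)
    have \<xi>n': "\<xi> (n + 1) = (u (n + 1), pd1 (pd2 H) a b * u n + pd2 (pd2 H) a b * u (n + 1))"
      using jacobi_momentum_backward[OF u, of "n + 1"] \<open>j \<le> n\<close>
      by (simp add: \<xi>_def d12_def d22_def a_def b_def C2_fun2_pd_commute[OF H_C2])
    note gen = D\<Phi>_linearized_generating_G[where a=a and b=b and ua="u n" and ub="u (n + 1)", folded Z Z' \<xi>n \<xi>n']
    show "snd (D\<Phi> (z n) (\<xi> n)) = jacobi_momentum G ?x ?v n"
      using gen(1) by (simp add: jacobi_momentum_def d11_def d12_def)
    show "snd (D\<Phi> (z (n + 1)) (\<xi> (n + 1))) = d12 G ?x n * ?v n + d22 G ?x n * ?v (n + 1)"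
      using gen(2) by (simp add: d12_def d22_def C2_fun2_pd_commute[OF G_C2])
  qed
  show "\<And>k. j \<le> k \<Longrightarrow> snd (D\<Phi> (z k) (\<xi> k)) = jacobi_momentum G ?x ?v k"
    using step(1) .
  show "jacobi_field G ?x j ?v"
    unfolding jacobi_field_def
  proof (intro allI impI)
    fix k assume "j < k"
    with step(1)[of k] step(2)[of "k - 1"]
    have "jacobi_momentum G ?x ?v k = d12 G ?x (k - 1) * ?v (k - 1) + d22 G ?x (k - 1) * ?v k" by simp
    then show "jacobi_op G ?x ?v k = 0"
      unfolding jacobi_op_def jacobi_momentum_def by (simp add: algebra_simps)
  qed
qed


lemma d12_H_pos: "d12 H s n > 0" and d12_G_pos: "d12 G s n > 0"
  using H_twist G_twist by (simp_all add: d12_def)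

lemma d12_H_nonzero: "d12 H s n \<noteq> 0"
  using d12_H_pos by (metis less_irrefl)

text \<open>The H-Jacobi field whose tangent vector at \<open>j\<close> is \<open>- w j\<close>, where \<open>D\<Phi> (w k) = (0, 1)\<close>,
  is carried by \<open>D\<Phi>\<close> to a G-Jacobi field vanishing at \<open>j\<close>; beyond \<open>j + 1\<close> its value is the
  symplectic pairing with \<open>w k \<in> N\<^sub>H\<close>, which is positive. For the converse direction the
  H-field with tangent vector \<open>- (0, 1)\<close> at \<open>j\<close> plays the same role.\<close>
lemma no_conjugate_points_G_of_H:
  assumes z: "orbit T z" and ncH: "no_conjugate_points H (\<lambda>k. fst (z k))"
    and cone: "\<And>n v. D\<Phi> (z n) v = (0, 1) \<Longrightarrow>
      v \<in> N_cone H (fst (z (n - 1))) (fst (z n)) (fst (z (n + 1)))"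
  shows "no_conjugate_points G (\<lambda>k. fst (\<Phi> (z k)))"
proof (rule no_conjugate_pointsI[OF d12_G_pos])
  let ?q = "\<lambda>k. fst (z k)" and ?x = "\<lambda>k. fst (\<Phi> (z k))"
  fix j
  define w where "w k = (- fst (D\<Phi> (z k) (0, 1)), fst (D\<Phi> (z k) (1, 0)))" for k
  have Dw: "D\<Phi> (z k) (w k) = (0, 1)" for k unfolding w_def by (rule D\<Phi>_vertical_preimage)
  obtain u where u: "jacobi_field H ?q (j - 1) u" "u j = - fst (w j)"
    "jacobi_momentum H ?q u j = - snd (w j)"
    using jacobi_field_exists_momentum[OF d12_H_nonzero] by blast
  define \<xi> where "\<xi> k = (u k, jacobi_momentum H ?q u k)" for k
  define v where "v k = fst (D\<Phi> (z k) (\<xi> k))" for k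
  have v: "jacobi_field G ?x (j - 1) v"
    and v_mom: "\<And>k. j - 1 \<le> k \<Longrightarrow> snd (D\<Phi> (z k) (\<xi> k)) = jacobi_momentum G ?x v k"
    using jacobi_field_transfer[OF z u(1)] unfolding v_def \<xi>_def by simp_all
  have "\<xi> j = - w j" using u by (simp add: \<xi>_def prod_eq_iff)
  then have D\<xi>j: "D\<Phi> (z j) (\<xi> j) = (0, - 1)" using Dw[of j] linear_neg[OF D\<Phi>_linear] by simp
  then have "v j = 0" by (simp add: v_def)
  have "d12 G ?x j * v (j + 1) = 1"
    using v_mom[of j] D\<xi>j \<open>v j = 0\<close> by (simp add: v_def jacobi_momentum_def)
  then have "v (j + 1) > 0" using d12_G_pos[of ?x j] by (metis zero_less_mult_pos zero_less_one)
  have v_pos: "v k > 0" if "j + 2 \<le> k" for k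
  proof -
    have "(- u j, - jacobi_momentum H ?q u j) \<in> N_cone H (?q (j - 1)) (?q j) (?q (j + 1))"
      using cone[OF Dw[of j]] u by simp
    from jacobi_field_N_cone_pos(2)[OF d12_H_pos ncH u(1) this that cone[OF Dw[of k]]]
    have "symplectic_form (\<xi> k) (w k) > 0" by (simp add: \<xi>_def)
    then show ?thesis using symplectic_form_D\<Phi>[of "z k" "\<xi> k" "w k"] Dw[of k]
      by (simp add: v_def symplectic_form_def)
  qed
  have "v n > 0" if "n > j" for n
    using \<open>v (j + 1) > 0\<close> v_pos[of n] that by (cases "n = j + 1") auto
  then show "\<exists>v. jacobi_field G ?x j v \<and> v j = 0 \<and> v (j + 1) > 0 \<and> (\<forall>n>j. v n > 0)"
    using jacobi_field_mono[OF v, of j] \<open>v j = 0\<close> \<open>v (j + 1) > 0\<close> by auto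
qed

lemma no_conjugate_points_H_of_G:
  assumes z: "orbit T z" and ncG: "no_conjugate_points G (\<lambda>k. fst (\<Phi> (z k)))"
    and cone: "\<And>n. D\<Phi> (z n) (0, 1) \<in>
      N_cone G (fst (\<Phi> (z (n - 1)))) (fst (\<Phi> (z n))) (fst (\<Phi> (z (n + 1))))"
  shows "no_conjugate_points H (\<lambda>k. fst (z k))"
proof (rule no_conjugate_pointsI[OF d12_H_pos])
  let ?q = "\<lambda>k. fst (z k)" and ?x = "\<lambda>k. fst (\<Phi> (z k))"
  fix j
  obtain u where u: "jacobi_field H ?q (j - 1) u" "u j = 0" "jacobi_momentum H ?q u j = - 1"
    using jacobi_field_exists_momentum[OF d12_H_nonzero] by blast
  define \<xi> where "\<xi> k = (u k, jacobi_momentum H ?q u k)" for k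
  define v where "v k = fst (D\<Phi> (z k) (\<xi> k))" for k
  have v: "jacobi_field G ?x (j - 1) v"
    and v_mom: "\<And>k. j - 1 \<le> k \<Longrightarrow> snd (D\<Phi> (z k) (\<xi> k)) = jacobi_momentum G ?x v k"
    using jacobi_field_transfer[OF z u(1)] unfolding v_def \<xi>_def by simp_all
  have "d12 H ?q j * u (j + 1) = 1" using u(2,3) by (simp add: jacobi_momentum_def)
  then have "u (j + 1) > 0" using d12_H_pos[of ?q j] by (metis zero_less_mult_pos zero_less_one)
  have D\<xi>: "D\<Phi> (z k) (\<xi> k) = (v k, jacobi_momentum G ?x v k)" if "j - 1 \<le> k" for k
    using v_mom[OF that] by (simp add: v_def prod_eq_iff)
  have u_pos: "u k > 0" if "j + 2 \<le> k" for k
  proof -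
    have "\<xi> j = - (0, 1)" using u(2,3) by (simp add: \<xi>_def)
    then have "D\<Phi> (z j) (\<xi> j) = - D\<Phi> (z j) (0, 1)" by (simp only: linear_neg[OF D\<Phi>_linear])
    then have "(- v j, - jacobi_momentum G ?x v j) = D\<Phi> (z j) (0, 1)"
      using D\<xi>[of j] by (simp add: prod_eq_iff)
    with cone[of j] have "(- v j, - jacobi_momentum G ?x v j) \<in> N_cone G (?x (j - 1)) (?x j) (?x (j + 1))"
      by simp
    from jacobi_field_N_cone_pos(2)[OF d12_G_pos ncG v this that cone[of k]]
    have "symplectic_form (D\<Phi> (z k) (\<xi> k)) (D\<Phi> (z k) (0, 1)) > 0" using D\<xi>[of k] that by simp
    then have "symplectic_form (\<xi> k) (0, 1) > 0" by (simp only: symplectic_form_D\<Phi>)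
    then show ?thesis by (simp add: \<xi>_def symplectic_form_def)
  qed
  have "u n > 0" if "n > j" for n
    using \<open>u (j + 1) > 0\<close> u_pos[of n] that by (cases "n = j + 1") auto
  then show "\<exists>u. jacobi_field H ?q j u \<and> u j = 0 \<and> u (j + 1) > 0 \<and> (\<forall>n>j. u n > 0)"
    using jacobi_field_mono[OF u(1), of j] u(2) \<open>u (j + 1) > 0\<close> by auto
qed

end

theorem theorem1p2:
  fixes T :: "real \<times> real \<Rightarrow> real \<times> real"
    and \<Phi> :: "real \<times> real \<Rightarrow> real \<times> real"
    and D\<Phi> :: "real \<times> real \<Rightarrow> real \<times> real \<Rightarrow> real \<times> real"
    and H G :: "real \<Rightarrow> real \<Rightarrow> real"
    and d :: real
  assumes Phi_bij: "bij \<Phi>"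
    and Phi_deck: "d = 1 \<or> d = -1" "\<And>q p. \<Phi> (q + 1, p) = \<Phi> (q, p) + (d, 0)"
    and Phi_deriv: "\<And>z. (\<Phi> has_derivative D\<Phi> z) (at z)"
    and Phi_C1: "\<And>v. continuous_on UNIV (\<lambda>z. D\<Phi> z v)"
    and Phi_sympl: "\<And>z. fst (D\<Phi> z (1, 0)) * snd (D\<Phi> z (0, 1))
                        - fst (D\<Phi> z (0, 1)) * snd (D\<Phi> z (1, 0)) = 1"
    and H_C2: "C2_fun2 H" and G_C2: "C2_fun2 G"
    and H_per: "\<And>q q'. H (q + 1) (q' + 1) = H q q'"
    and G_per: "\<And>x x'. G (x + 1) (x' + 1) = G x x'"
    and H_twist: "\<And>q q'. pd2 (pd1 H) q q' > 0"
    and G_twist: "\<And>x x'. pd2 (pd1 G) x x' > 0"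
    and T_gen_H: "\<And>q p q' p'. T (q, p) = (q', p') \<longleftrightarrow> p = - pd1 H q q' \<and> p' = pd2 H q q'"
    and T_gen_G: "\<And>z z'. T z = z' \<longleftrightarrow>
           snd (\<Phi> z) = - pd1 G (fst (\<Phi> z)) (fst (\<Phi> z')) \<and>
           snd (\<Phi> z') = pd2 G (fst (\<Phi> z)) (fst (\<Phi> z'))"
    and geom_H: "\<And>z n v. orbit T z \<Longrightarrow> m_config H (\<lambda>k. fst (z k)) \<Longrightarrow>
           D\<Phi> (z n) v = (0, 1) \<Longrightarrow>
           v \<in> N_cone H (fst (z (n - 1))) (fst (z n)) (fst (z (n + 1)))"
    and geom_G: "\<And>z n. orbit T z \<Longrightarrow> m_config G (\<lambda>k. fst (\<Phi> (z k))) \<Longrightarrow>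
           D\<Phi> (z n) (0, 1) \<in>
             N_cone G (fst (\<Phi> (z (n - 1)))) (fst (\<Phi> (z n))) (fst (\<Phi> (z (n + 1))))"
  shows "msweep T fst H = msweep T (\<lambda>z. fst (\<Phi> z)) G"
proof -
  interpret twist_map_two_coordinates T \<Phi> D\<Phi> H G
    by unfold_locales (rule Phi_deriv Phi_sympl H_C2 G_C2 H_twist G_twist T_gen_H T_gen_G)+
  have "m_config G (\<lambda>k. fst (\<Phi> (z k)))" if z: "orbit T z" "m_config H (\<lambda>k. fst (z k))" for z
  proof -
    have "no_conjugate_points H (\<lambda>k. fst (z k))"
      by (rule m_config_no_conjugate_points[OF H_C2 H_twist z(2)])
    from no_conjugate_points_G_of_H[OF z(1) this geom_H[OF z]]
    show ?thesis by (rule no_conjugate_points_m_config[OF G_C2 G_twist config_G[OF z(1)]])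
  qed
  moreover have "m_config H (\<lambda>k. fst (z k))" if z: "orbit T z" "m_config G (\<lambda>k. fst (\<Phi> (z k)))" for z
  proof -
    have "no_conjugate_points G (\<lambda>k. fst (\<Phi> (z k)))"
      by (rule m_config_no_conjugate_points[OF G_C2 G_twist z(2)])
    from no_conjugate_points_H_of_G[OF z(1) this geom_G[OF z]]
    show ?thesis by (rule no_conjugate_points_m_config[OF H_C2 H_twist config_H[OF z(1)]])
  qed
  ultimately show ?thesis unfolding msweep_def by blast
qed

end
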